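(* Let $k\geq 1$ and let $R$ be either $\mathbb{F}_q$ ($q$ a prime power) or $\mathbb{Z}/p^\ell\mathbb{Z}$ ($p$ prime, $\ell\geq1$). Let $E\subset R^2$, and suppose $|E|\gtrsim q^{1+\varepsilon}$ if $R=\mathbb{F}_q$, and $|E|\gtrsim p^{2\ell-1+\frac{1}{k+1}+\varepsilon}$ if $R=\mathbb{Z}/p^\ell\mathbb{Z}$, for some constant $\varepsilon>0$. For $g\in\mathrm{SL}_2(R)$ define $f(g)=\sum_{x\in R^2}E(x)E(gx)$, where $E(\cdot)$ denotes the indicator function of $E$. Then \[|E|^{2(k+1)}\lesssim |\mathcal{C}_{k+1}(E)|\sum_{g\in\mathrm{SL}_2(R)}f(g)^{k+1}.\]
   Context: For $x=(x_1,x_2),y=(y_1,y_2)\in R^2$, write $y^\perp=(y_2,-y_1)$, so $x\cdot y^\perp=x_1y_2-x_2y_1$. For $E\subset R^2$, define an equivalence relation $\sim$ on $E^{k+1}$ by $(x^1,\dots,x^{k+1})\sim(y^1,\dots,y^{k+1})$ iff $x^i\cdot x^{j\perp}=y^i\cdot y^{j\perp}$ for all pairs $i,j$; $\mathcal{C}_{k+1}(E)$ is the set of equivalence classes. $\mathrm{SL}_2(R)$ acts on $R^2$ by matrix multiplication. $X\lesssim Y$ means $X\leq CY$ with $C$ independent of the ring and of $E$ (possibly depending on $k,\varepsilon$). *)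

theory Defs
  imports "HOL-Number_Theory.Residues" "HOL-Algebra.Ring"
begin

definition plane :: "('a, 'b) ring_scheme \<Rightarrow> ('a \<times> 'a) set" where
  "plane R = carrier R \<times> carrier R"

definition dot_perp :: "('a, 'b) ring_scheme \<Rightarrow> 'a \<times> 'a \<Rightarrow> 'a \<times> 'a \<Rightarrow> 'a" where
  "dot_perp R x y = (fst x \<otimes>\<^bsub>R\<^esub> snd y) \<ominus>\<^bsub>R\<^esub> (snd x \<otimes>\<^bsub>R\<^esub> fst y)"

definition tuples :: "nat \<Rightarrow> ('a \<times> 'a) set \<Rightarrow> ('a \<times> 'a) list set" where
  "tuples m E = {xs. length xs = m \<and> set xs \<subseteq> E}"

definition tuple_equiv :: "('a, 'b) ring_scheme \<Rightarrow> nat \<Rightarrow> ('a \<times> 'a) set \<Rightarrow> (('a \<times> 'a) list \<times> ('a \<times> 'a) list) set" where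
  "tuple_equiv R m E = {(xs, ys). xs \<in> tuples m E \<and> ys \<in> tuples m E \<and>
      (\<forall>i<m. \<forall>j<m. dot_perp R (xs ! i) (xs ! j) = dot_perp R (ys ! i) (ys ! j))}"

definition config_classes :: "('a, 'b) ring_scheme \<Rightarrow> nat \<Rightarrow> ('a \<times> 'a) set \<Rightarrow> ('a \<times> 'a) list set set" where
  "config_classes R m E = tuples m E // tuple_equiv R m E"

(* 2x2 matrices ((a,b),(c,d)) = [[a,b],[c,d]] *)
type_synonym 'a mat2 = "('a \<times> 'a) \<times> ('a \<times> 'a)"

definition SL2 :: "('a, 'b) ring_scheme \<Rightarrow> 'a mat2 set" where
  "SL2 R = {((a, b), (c, d)). a \<in> carrier R \<and> b \<in> carrier R \<and> c \<in> carrier R \<and> d \<in> carrier R \<and>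
      (a \<otimes>\<^bsub>R\<^esub> d) \<ominus>\<^bsub>R\<^esub> (b \<otimes>\<^bsub>R\<^esub> c) = \<one>\<^bsub>R\<^esub>}"

definition mat_act :: "('a, 'b) ring_scheme \<Rightarrow> 'a mat2 \<Rightarrow> 'a \<times> 'a \<Rightarrow> 'a \<times> 'a" where
  "mat_act R g x = (case g of ((a, b), (c, d)) \<Rightarrow>
      ((a \<otimes>\<^bsub>R\<^esub> fst x) \<oplus>\<^bsub>R\<^esub> (b \<otimes>\<^bsub>R\<^esub> snd x),
       (c \<otimes>\<^bsub>R\<^esub> fst x) \<oplus>\<^bsub>R\<^esub> (d \<otimes>\<^bsub>R\<^esub> snd x)))"

definition fE :: "('a, 'b) ring_scheme \<Rightarrow> ('a \<times> 'a) set \<Rightarrow> 'a mat2 \<Rightarrow> real" where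
  "fE R E g = (\<Sum>x\<in>plane R. of_bool (x \<in> E) * of_bool (mat_act R g x \<in> E))"

end

theory Submission
  imports Defs "HOL-Analysis.Convex" "HOL-Real_Asymp.Real_Asymp"
begin

text \<open>
  Cauchy-Schwarz over the fibres of \<open>x \<mapsto> (configuration class of x, label \<tau>(x))\<close> on a set \<open>G\<close> of
  (k+1)-tuples gives |G|^2 \<le> #labels \<cdot> |C_(k+1)(E)| \<cdot> #(pairs in a common fibre). When tuples in a
  common fibre always differ by an element of SL_2(R), these pairs inject into
  {(g, x). x \<in> E^(k+1), g x \<in> E^(k+1)}, a set with \<Sum>_g f(g)^(k+1) elements. So it suffices to find
  such a \<open>G\<close> of size at least a constant times |E|^(k+1), with boundedly many labels.

  Write [x, y] = x \<cdot> y^\<bottom>. If [x_0, x_1] is a unit, then x_0 and x_1 / [x_0, x_1] form a frame in which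
  the configuration determines the coordinates of every x_i, so no labels are needed. Over F_q, and
  over Z/p^l for large p, density makes at least half of all tuples of this kind. For bounded p the
  tuples are sorted by the p-adic valuations j of x_0 and v of [x_0 / p^j, x_1], both below a bound V
  depending only on c and \<epsilon>: the configuration determines the frame coordinates modulo p^(l-j) resp.
  p^(l-v), so their top digits, at most p^(V(2k+3)) labels, suffice, and density makes the tuples with
  a valuation \<ge> V rare. Rings of bounded size are covered by the trivial bound |E|^(k+1) \<le> f(1)^(k+1).
\<close>

section \<open>Counting tuples up to the action of SL2\<close>

lemma card_sq_le_card_image_mult_card_fibre_pairs:
  assumes "finite A"
  shows "real (card A)^2 \<le> real (card (h ` A)) * real (card {q\<in>A \<times> A. h (fst q) = h (snd q)})"
proof -
  let ?fib = "\<lambda>b. {x\<in>A. h x = b}"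
  let ?P = "{q\<in>A \<times> A. h (fst q) = h (snd q)}"
  have "card A = (\<Sum>b\<in>h ` A. card (?fib b))"
    using sum.image_gen[OF assms, of "\<lambda>_. 1::nat" h] by simp
  moreover have "?P = (\<Union>b\<in>h ` A. ?fib b \<times> ?fib b)"
    by auto
  then have "card ?P = (\<Sum>b\<in>h ` A. card (?fib b \<times> ?fib b))"
    using assms by (simp only:) (rule card_UN_disjoint, auto)
  then have "card ?P = (\<Sum>b\<in>h ` A. card (?fib b) ^ 2)"
    by (simp add: card_cartesian_product power2_eq_square)
  ultimately show ?thesis
    using sum_squared_le_sum_of_squares[of "\<lambda>b. real (card (?fib b))" "h ` A"]
    by (simp add: mult.commute)
qed

lemma exists_card_UN_le_card_mult:
  assumes "finite I" "I \<noteq> {}" "\<And>i. i \<in> I \<Longrightarrow> finite (G i)"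
  shows "\<exists>i\<in>I. card (\<Union>i\<in>I. G i) \<le> card I * card (G i)"
proof -
  have "Max ((\<lambda>i. card (G i)) ` I) \<in> (\<lambda>i. card (G i)) ` I"
    using assms(1,2) by (intro Max_in) auto
  then obtain i where i: "i \<in> I" "card (G i) = Max ((\<lambda>i. card (G i)) ` I)"
    by auto
  then have "\<forall>i'\<in>I. card (G i') \<le> card (G i)"
    using assms(1) by simp
  have "card (\<Union>i\<in>I. G i) \<le> (\<Sum>i'\<in>I. card (G i'))"
    by (rule card_UN_le[OF assms(1)])
  also have "\<dots> \<le> card I * card (G i)"
    using sum_bounded_above[of I "\<lambda>i'. card (G i')" "card (G i)"] \<open>\<forall>i'\<in>I. _\<close> by simp
  finally show ?thesis using i(1) by blast
qed

lemma card_le_twice_if_diff_small: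
  assumes "2 * card (T - G) \<le> card T" "finite T" "G \<subseteq> T"
  shows "card T \<le> 2 * card G"
proof -
  have "card T = card G + card (T - G)"
    using assms(2,3) by (metis card_Diff_subset card_mono finite_subset le_add_diff_inverse)
  then show ?thesis
    using assms(1) by linarith
qed

lemma power_two_mult_le:
  fixes a t g b :: real
  assumes "0 \<le> a" "a ^ m \<le> t * g" "g^2 \<le> b" "0 \<le> t"
  shows "a ^ (2 * m) \<le> t^2 * b"
proof -
  have "a ^ (2 * m) = (a ^ m)^2"
    by (simp add: power_mult mult.commute)
  also have "\<dots> \<le> (t * g)^2"
    by (rule power_mono) (use assms(1,2) in simp_all)
  also have "\<dots> = t^2 * g^2"
    by (simp add: power_mult_distrib)
  also have "\<dots> \<le> t^2 * b"
    using assms(3) by (simp add: mult_left_mono)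
  finally show ?thesis .
qed

lemma finite_plane: "finite (carrier R) \<Longrightarrow> finite (plane R)"
  by (simp add: plane_def)

lemma card_plane: "card (plane R) = card (carrier R) ^ 2"
  by (simp add: plane_def card_cartesian_product power2_eq_square)

lemma finite_tuples: "finite E \<Longrightarrow> finite (tuples m E)"
  unfolding tuples_def using finite_lists_length_eq[of E m] by (simp add: conj_commute)

lemma card_tuples: "finite E \<Longrightarrow> card (tuples m E) = card E ^ m"
  unfolding tuples_def using card_lists_length_eq[of E m] by (simp add: conj_commute)

lemma card_tuples_filter_first_le:
  assumes "finite E" "m \<ge> 1"
  shows "card {xs\<in>tuples m E. P (xs ! 0)} \<le> card {z\<in>E. P z} * card E ^ (m - 1)"
proof -
  have "inj_on (\<lambda>xs. (xs ! 0, tl xs)) {xs\<in>tuples m E. P (xs ! 0)}"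
  proof (rule inj_onI)
    fix xs ys assume "xs \<in> {xs\<in>tuples m E. P (xs ! 0)}" "ys \<in> {xs\<in>tuples m E. P (xs ! 0)}"
      and "(xs ! 0, tl xs) = (ys ! 0, tl ys)"
    then show "xs = ys"
      using assms(2) by (cases xs; cases ys) (auto simp: tuples_def)
  qed
  moreover have "(\<lambda>xs. (xs ! 0, tl xs)) ` {xs\<in>tuples m E. P (xs ! 0)} \<subseteq> {z\<in>E. P z} \<times> tuples (m - 1) E"
  proof (rule image_subsetI)
    fix xs assume "xs \<in> {xs\<in>tuples m E. P (xs ! 0)}"
    then show "(xs ! 0, tl xs) \<in> {z\<in>E. P z} \<times> tuples (m - 1) E"
      using assms(2) by (cases xs) (auto simp: tuples_def)
  qed
  ultimately have "card {xs\<in>tuples m E. P (xs ! 0)} \<le> card ({z\<in>E. P z} \<times> tuples (m - 1) E)"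
    by (rule card_inj_on_le) (use assms(1) in \<open>auto intro: finite_tuples\<close>)
  then show ?thesis
    by (simp add: card_cartesian_product card_tuples[OF assms(1)])
qed

lemma card_tuples_filter_first_two_le:
  assumes "finite E" "m \<ge> 2"
  shows "card {xs\<in>tuples m E. P (xs ! 0) (xs ! 1)}
    \<le> card {q\<in>E \<times> E. P (fst q) (snd q)} * card E ^ (m - 2)"
proof -
  let ?F = "\<lambda>xs. ((xs ! 0, xs ! 1), drop 2 xs)"
  have split: "xs = xs ! 0 # xs ! 1 # drop 2 xs" if "length xs \<ge> 2" for xs
    using that by (cases xs; cases "tl xs") auto
  have "inj_on ?F {xs\<in>tuples m E. P (xs ! 0) (xs ! 1)}"
  proof (rule inj_onI)
    fix xs ys assume "xs \<in> {xs\<in>tuples m E. P (xs ! 0) (xs ! 1)}" "ys \<in> {xs\<in>tuples m E. P (xs ! 0) (xs ! 1)}"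
      and "?F xs = ?F ys"
    then show "xs = ys"
      using assms(2) split[of xs] split[of ys] by (auto simp: tuples_def)
  qed
  moreover have "?F ` {xs\<in>tuples m E. P (xs ! 0) (xs ! 1)} \<subseteq> {q\<in>E \<times> E. P (fst q) (snd q)} \<times> tuples (m - 2) E"
  proof (rule image_subsetI)
    fix xs assume "xs \<in> {xs\<in>tuples m E. P (xs ! 0) (xs ! 1)}"
    then have "length xs = m" "set xs \<subseteq> E" "P (xs ! 0) (xs ! 1)"
      by (auto simp: tuples_def)
    moreover have "xs ! 0 \<in> set xs" "xs ! 1 \<in> set xs" "set (drop 2 xs) \<subseteq> set xs"
      using calculation(1) assms(2) by (auto dest: in_set_dropD)
    ultimately show "?F xs \<in> {q\<in>E \<times> E. P (fst q) (snd q)} \<times> tuples (m - 2) E"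
      by (auto simp: tuples_def)
  qed
  ultimately have "card {xs\<in>tuples m E. P (xs ! 0) (xs ! 1)}
      \<le> card ({q\<in>E \<times> E. P (fst q) (snd q)} \<times> tuples (m - 2) E)"
    by (rule card_inj_on_le) (use assms(1) in \<open>auto intro: finite_tuples\<close>)
  then show ?thesis
    by (simp add: card_cartesian_product card_tuples[OF assms(1)])
qed

lemma finite_SL2: "finite (carrier R) \<Longrightarrow> finite (SL2 R)"
  by (rule finite_subset[of _ "plane R \<times> plane R"]) (auto simp: SL2_def plane_def)

lemma finite_config_classes: "finite E \<Longrightarrow> finite (config_classes R m E)"
  unfolding config_classes_def quotient_def by (simp add: finite_tuples)

lemma config_classes_nonempty: "E \<noteq> {} \<Longrightarrow> config_classes R m E \<noteq> {}"
proof -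
  assume "E \<noteq> {}"
  then obtain e where "e \<in> E" by blast
  then have "replicate m e \<in> tuples m E" by (auto simp: tuples_def)
  then show ?thesis by (auto simp: config_classes_def quotient_def)
qed

lemma fE_eq_card:
  assumes "finite (carrier R)" "E \<subseteq> plane R"
  shows "fE R E g = real (card {x\<in>E. mat_act R g x \<in> E})"
proof -
  have "fE R E g = (\<Sum>x\<in>plane R. of_bool (x \<in> E \<and> mat_act R g x \<in> E))"
    unfolding fE_def by (intro sum.cong) auto
  also have "\<dots> = real (card (plane R \<inter> {x. x \<in> E \<and> mat_act R g x \<in> E}))"
    using finite_plane[OF assms(1)] by simp
  also have "plane R \<inter> {x. x \<in> E \<and> mat_act R g x \<in> E} = {x\<in>E. mat_act R g x \<in> E}"
    using assms(2) by auto
  finally show ?thesis .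
qed

lemma fE_nonneg: "0 \<le> fE R E g"
  unfolding fE_def by (intro sum_nonneg) auto

lemma sum_fE_power_nonneg: "0 \<le> (\<Sum>g\<in>SL2 R. fE R E g ^ m)"
  by (intro sum_nonneg zero_le_power fE_nonneg)

definition SL2_maps_to :: "('a, 'b) ring_scheme \<Rightarrow> ('a \<times> 'a) list \<Rightarrow> ('a \<times> 'a) list \<Rightarrow> bool" where
  "SL2_maps_to R xs ys \<longleftrightarrow> (\<exists>g\<in>SL2 R. map (mat_act R g) xs = ys)"

lemma tuples_filter_iff:
  "xs \<in> tuples m {x\<in>E. f x \<in> E} \<longleftrightarrow> xs \<in> tuples m E \<and> map f xs \<in> tuples m E"
  by (auto simp: tuples_def)

lemma card_SL2_pairs_le_sum_fE:
  assumes fin: "finite (carrier R)" and EP: "E \<subseteq> plane R"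
    and P: "P \<subseteq> tuples m E \<times> tuples m E" and maps: "\<And>xs ys. (xs, ys) \<in> P \<Longrightarrow> SL2_maps_to R xs ys"
  shows "real (card P) \<le> (\<Sum>g\<in>SL2 R. fE R E g ^ m)"
proof -
  have fE: "finite E" using EP finite_plane[OF fin] finite_subset by blast
  define F where "F q = (SOME g. g \<in> SL2 R \<and> map (mat_act R g) (fst q) = snd q, fst q)" for q
  have F: "fst (F q) \<in> SL2 R" "map (mat_act R (fst (F q))) (fst q) = snd q" if "q \<in> P" for q
    using someI_ex[of "\<lambda>g. g \<in> SL2 R \<and> map (mat_act R g) (fst q) = snd q"] maps[of "fst q" "snd q"] that
    by (auto simp: F_def SL2_maps_to_def)
  have "inj_on F P"
  proof (rule inj_onI)
    fix q q' assume q: "q \<in> P" "q' \<in> P" "F q = F q'"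
    then have "fst q = fst q'" by (simp add: F_def)
    moreover have "snd q = snd q'" using F[OF q(1)] F[OF q(2)] q(3) calculation by metis
    ultimately show "q = q'" by (simp add: prod_eq_iff)
  qed
  moreover have "F ` P \<subseteq> (SIGMA g:SL2 R. tuples m {x\<in>E. mat_act R g x \<in> E})"
  proof
    fix q' assume "q' \<in> F ` P"
    then obtain q where "q \<in> P" "q' = F q" by blast
    then show "q' \<in> (SIGMA g:SL2 R. tuples m {x\<in>E. mat_act R g x \<in> E})"
      using F[of q] P by (auto simp: tuples_filter_iff F_def)
  qed
  ultimately have "card P \<le> card (SIGMA g:SL2 R. tuples m {x\<in>E. mat_act R g x \<in> E})"
    by (rule card_inj_on_le) (use finite_SL2[OF fin] fE in \<open>auto intro!: finite_SigmaI finite_tuples\<close>)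
  also have "\<dots> = (\<Sum>g\<in>SL2 R. card (tuples m {x\<in>E. mat_act R g x \<in> E}))"
    by (rule card_SigmaI) (use finite_SL2[OF fin] fE in \<open>auto intro: finite_tuples\<close>)
  also have "\<dots> = (\<Sum>g\<in>SL2 R. card {x\<in>E. mat_act R g x \<in> E} ^ m)"
    using fE by (simp add: card_tuples)
  finally have "real (card P) \<le> real (\<Sum>g\<in>SL2 R. card {x\<in>E. mat_act R g x \<in> E} ^ m)"
    by (simp only: of_nat_le_iff)
  then show ?thesis
    by (simp add: fE_eq_card[OF fin EP])
qed

lemma card_sq_le_via_orbit_labels:
  assumes fin: "finite (carrier R)" and EP: "E \<subseteq> plane R" and GT: "G \<subseteq> tuples m E"
    and lab: "\<tau> ` G \<subseteq> L" "finite L"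
    and maps: "\<And>xs ys. xs \<in> G \<Longrightarrow> ys \<in> G \<Longrightarrow> (xs, ys) \<in> tuple_equiv R m E \<Longrightarrow> \<tau> xs = \<tau> ys
                 \<Longrightarrow> SL2_maps_to R xs ys"
  shows "real (card G)^2 \<le> real (card L) * real (card (config_classes R m E)) * (\<Sum>g\<in>SL2 R. fE R E g ^ m)"
proof -
  have fE: "finite E" using EP finite_plane[OF fin] finite_subset by blast
  have fG: "finite G" using GT finite_tuples[OF fE] finite_subset by blast
  define h where "h xs = (tuple_equiv R m E `` {xs}, \<tau> xs)" for xs
  let ?P = "{q\<in>G \<times> G. h (fst q) = h (snd q)}"
  have "h ` G \<subseteq> config_classes R m E \<times> L"
    using GT lab unfolding h_def config_classes_def by (auto intro: quotientI)
  then have "card (h ` G) \<le> card (config_classes R m E \<times> L)"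
    using finite_config_classes[OF fE] lab(2) by (intro card_mono finite_cartesian_product)
  then have image: "real (card (h ` G)) \<le> real (card L) * real (card (config_classes R m E))"
    by (metis card_cartesian_product mult.commute of_nat_le_iff of_nat_mult)
  have pairs: "real (card ?P) \<le> (\<Sum>g\<in>SL2 R. fE R E g ^ m)"
  proof (rule card_SL2_pairs_le_sum_fE[OF fin EP])
    show "?P \<subseteq> tuples m E \<times> tuples m E" using GT by auto
    fix xs ys assume "(xs, ys) \<in> ?P"
    moreover have "(ys, ys) \<in> tuple_equiv R m E" if "ys \<in> G"
      using that GT by (auto simp: tuple_equiv_def)
    ultimately show "SL2_maps_to R xs ys"
      by (intro maps) (auto simp: h_def)
  qed
  have "real (card G)^2 \<le> real (card (h ` G)) * real (card ?P)"
    by (rule card_sq_le_card_image_mult_card_fibre_pairs[OF fG])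
  also have "\<dots> \<le> (real (card L) * real (card (config_classes R m E))) * (\<Sum>g\<in>SL2 R. fE R E g ^ m)"
    using image pairs by (intro mult_mono) auto
  finally show ?thesis .
qed

section \<open>Frames\<close>

definition plane_scale :: "('a, 'b) ring_scheme \<Rightarrow> 'a \<Rightarrow> 'a \<times> 'a \<Rightarrow> 'a \<times> 'a" where
  "plane_scale R s x = (s \<otimes>\<^bsub>R\<^esub> fst x, s \<otimes>\<^bsub>R\<^esub> snd x)"

text \<open>If \<open>[a, w] = 1\<close> then \<open>z = [z, w] a + [a, z] w\<close>; the matrix \<open>frame_mat R a w b w'\<close> is
  \<open>z \<mapsto> [z, w] b + [a, z] w'\<close> (with \<open>[x, y] = x \<cdot> y\<^sup>\<bottom>\<close>), so it sends \<open>a\<close> to \<open>b\<close> and \<open>w\<close> to \<open>w'\<close>.\<close>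
definition frame_mat :: "('a, 'b) ring_scheme \<Rightarrow> 'a \<times> 'a \<Rightarrow> 'a \<times> 'a \<Rightarrow> 'a \<times> 'a \<Rightarrow> 'a \<times> 'a \<Rightarrow> 'a mat2" where
  "frame_mat R a w b w' =
    ((fst b \<otimes>\<^bsub>R\<^esub> snd w \<ominus>\<^bsub>R\<^esub> fst w' \<otimes>\<^bsub>R\<^esub> snd a, fst w' \<otimes>\<^bsub>R\<^esub> fst a \<ominus>\<^bsub>R\<^esub> fst b \<otimes>\<^bsub>R\<^esub> fst w),
     (snd b \<otimes>\<^bsub>R\<^esub> snd w \<ominus>\<^bsub>R\<^esub> snd w' \<otimes>\<^bsub>R\<^esub> snd a, snd w' \<otimes>\<^bsub>R\<^esub> fst a \<ominus>\<^bsub>R\<^esub> snd b \<otimes>\<^bsub>R\<^esub> fst w))"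

definition unimodular :: "('a, 'b) ring_scheme \<Rightarrow> 'a \<times> 'a \<Rightarrow> bool" where
  "unimodular R a \<longleftrightarrow> (\<exists>w\<in>plane R. dot_perp R a w = \<one>\<^bsub>R\<^esub>)"

context cring
begin

lemma dot_perp_closed: "x \<in> plane R \<Longrightarrow> y \<in> plane R \<Longrightarrow> dot_perp R x y \<in> carrier R"
  by (auto simp: dot_perp_def plane_def)

lemma plane_scale_closed: "s \<in> carrier R \<Longrightarrow> x \<in> plane R \<Longrightarrow> plane_scale R s x \<in> plane R"
  by (auto simp: plane_scale_def plane_def)

lemma dot_perp_scale_left:
  "s \<in> carrier R \<Longrightarrow> x \<in> plane R \<Longrightarrow> z \<in> plane R \<Longrightarrow>
   dot_perp R (plane_scale R s x) z = s \<otimes> dot_perp R x z"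
  by (cases x, cases z) (simp add: plane_scale_def dot_perp_def plane_def, algebra)

lemma dot_perp_scale_right:
  "s \<in> carrier R \<Longrightarrow> x \<in> plane R \<Longrightarrow> z \<in> plane R \<Longrightarrow>
   dot_perp R z (plane_scale R s x) = s \<otimes> dot_perp R z x"
  by (cases x, cases z) (simp add: plane_scale_def dot_perp_def plane_def, algebra)

lemma dot_perp_self: "a \<in> plane R \<Longrightarrow> dot_perp R a a = \<zero>"
  by (cases a) (simp add: dot_perp_def plane_def, algebra)

lemma dot_perp_swap: "a \<in> plane R \<Longrightarrow> z \<in> plane R \<Longrightarrow> dot_perp R z a = \<ominus> dot_perp R a z"
  by (cases a, cases z) (simp add: dot_perp_def plane_def, algebra)

lemma dot_perp_add_multiple:
  "a \<in> plane R \<Longrightarrow> w \<in> plane R \<Longrightarrow> z \<in> plane R \<Longrightarrow> t \<in> carrier R \<Longrightarrow>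
   dot_perp R z (fst w \<oplus> t \<otimes> fst a, snd w \<oplus> t \<otimes> snd a) = dot_perp R z w \<oplus> t \<otimes> dot_perp R z a"
  by (cases a, cases w, cases z) (simp add: dot_perp_def plane_def, algebra)

lemma minus_left_cancel:
  assumes "c \<in> carrier R" "s \<in> carrier R" "t \<in> carrier R" "c \<ominus> s = c \<ominus> t"
  shows "s = t"
proof -
  have "s = c \<ominus> (c \<ominus> s)" using assms(1-3) by algebra
  also have "\<dots> = t" unfolding assms(4) using assms(1-3) by algebra
  finally show ?thesis .
qed

lemma mat_act_frame_mat:
  assumes "a \<in> plane R" "w \<in> plane R" "b \<in> plane R" "w' \<in> plane R" "z \<in> plane R"
  shows "mat_act R (frame_mat R a w b w') z =
    (dot_perp R z w \<otimes> fst b \<oplus> dot_perp R a z \<otimes> fst w', dot_perp R z w \<otimes> snd b \<oplus> dot_perp R a z \<otimes> snd w')"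
  using assms
  by (cases a, cases w, cases b, cases w', cases z)
    (simp add: frame_mat_def mat_act_def dot_perp_def plane_def, algebra)

lemma frame_mat_SL2:
  assumes "a \<in> plane R" "w \<in> plane R" "b \<in> plane R" "w' \<in> plane R"
    and "dot_perp R a w = \<one>" "dot_perp R b w' = \<one>"
  shows "frame_mat R a w b w' \<in> SL2 R"
proof -
  obtain a1 a2 w1 w2 b1 b2 v1 v2 where e: "a = (a1, a2)" "w = (w1, w2)" "b = (b1, b2)" "w' = (v1, v2)"
    by (cases a, cases w, cases b, cases w')
  have c: "a1 \<in> carrier R" "a2 \<in> carrier R" "w1 \<in> carrier R" "w2 \<in> carrier R"
     "b1 \<in> carrier R" "b2 \<in> carrier R" "v1 \<in> carrier R" "v2 \<in> carrier R"
    using assms(1-4) e by (auto simp: plane_def)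
  have "(b1 \<otimes> w2 \<ominus> v1 \<otimes> a2) \<otimes> (v2 \<otimes> a1 \<ominus> b2 \<otimes> w1) \<ominus> (v1 \<otimes> a1 \<ominus> b1 \<otimes> w1) \<otimes> (b2 \<otimes> w2 \<ominus> v2 \<otimes> a2)
      = (b1 \<otimes> v2 \<ominus> b2 \<otimes> v1) \<otimes> (a1 \<otimes> w2 \<ominus> a2 \<otimes> w1)"
    using c by algebra
  also have "\<dots> = \<one>"
    using assms(5,6) e by (simp add: dot_perp_def)
  finally show ?thesis
    using c e unfolding frame_mat_def SL2_def by auto
qed

lemma frame_coords:
  assumes "a \<in> plane R" "w \<in> plane R" "z \<in> plane R" "dot_perp R a w = \<one>"
  shows "z = (dot_perp R z w \<otimes> fst a \<oplus> dot_perp R a z \<otimes> fst w, dot_perp R z w \<otimes> snd a \<oplus> dot_perp R a z \<otimes> snd w)"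
proof -
  obtain a1 a2 w1 w2 z1 z2 where e: "a = (a1, a2)" "w = (w1, w2)" "z = (z1, z2)"
    by (cases a, cases w, cases z)
  have c: "a1 \<in> carrier R" "a2 \<in> carrier R" "w1 \<in> carrier R" "w2 \<in> carrier R"
     "z1 \<in> carrier R" "z2 \<in> carrier R"
    using assms(1-3) e by (auto simp: plane_def)
  have d: "a1 \<otimes> w2 \<ominus> a2 \<otimes> w1 = \<one>"
    using assms(4) e by (simp add: dot_perp_def)
  have "z1 = z1 \<otimes> (a1 \<otimes> w2 \<ominus> a2 \<otimes> w1)" "z2 = z2 \<otimes> (a1 \<otimes> w2 \<ominus> a2 \<otimes> w1)"
    using d c by simp_all
  moreover have "z1 \<otimes> (a1 \<otimes> w2 \<ominus> a2 \<otimes> w1) = (z1 \<otimes> w2 \<ominus> z2 \<otimes> w1) \<otimes> a1 \<oplus> (a1 \<otimes> z2 \<ominus> a2 \<otimes> z1) \<otimes> w1"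
    "z2 \<otimes> (a1 \<otimes> w2 \<ominus> a2 \<otimes> w1) = (z1 \<otimes> w2 \<ominus> z2 \<otimes> w1) \<otimes> a2 \<oplus> (a1 \<otimes> z2 \<ominus> a2 \<otimes> z1) \<otimes> w2"
    using c by algebra+
  ultimately show ?thesis
    using e by (simp add: dot_perp_def)
qed

lemma dot_perp_frame_expand:
  assumes "a \<in> plane R" "w \<in> plane R" "z \<in> plane R" "y \<in> plane R" "dot_perp R a w = \<one>"
  shows "dot_perp R z y = dot_perp R z w \<otimes> dot_perp R a y \<ominus> dot_perp R a z \<otimes> dot_perp R y w"
proof -
  obtain a1 a2 w1 w2 z1 z2 y1 y2 where e: "a = (a1, a2)" "w = (w1, w2)" "z = (z1, z2)" "y = (y1, y2)"
    by (cases a, cases w, cases z, cases y)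
  have c: "a1 \<in> carrier R" "a2 \<in> carrier R" "w1 \<in> carrier R" "w2 \<in> carrier R"
     "z1 \<in> carrier R" "z2 \<in> carrier R" "y1 \<in> carrier R" "y2 \<in> carrier R"
    using assms(1-4) e by (auto simp: plane_def)
  have d: "a1 \<otimes> w2 \<ominus> a2 \<otimes> w1 = \<one>"
    using assms(5) e by (simp add: dot_perp_def)
  have "z1 \<otimes> y2 \<ominus> z2 \<otimes> y1 = (z1 \<otimes> y2 \<ominus> z2 \<otimes> y1) \<otimes> (a1 \<otimes> w2 \<ominus> a2 \<otimes> w1)"
    using d c by simp
  also have "\<dots> = (z1 \<otimes> w2 \<ominus> z2 \<otimes> w1) \<otimes> (a1 \<otimes> y2 \<ominus> a2 \<otimes> y1) \<ominus> (a1 \<otimes> z2 \<ominus> a2 \<otimes> z1) \<otimes> (y1 \<otimes> w2 \<ominus> y2 \<otimes> w1)"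
    using c by algebra
  finally show ?thesis
    using e by (simp add: dot_perp_def)
qed

lemma SL2_maps_to_if_frame_coords:
  assumes "a \<in> plane R" "w \<in> plane R" "b \<in> plane R" "w' \<in> plane R"
    and "dot_perp R a w = \<one>" "dot_perp R b w' = \<one>"
    and "set xs \<subseteq> plane R" "set ys \<subseteq> plane R" "length xs = length ys"
    and "\<And>i. i < length xs \<Longrightarrow>
           dot_perp R (xs ! i) w = dot_perp R (ys ! i) w' \<and> dot_perp R a (xs ! i) = dot_perp R b (ys ! i)"
  shows "SL2_maps_to R xs ys"
  unfolding SL2_maps_to_def
proof
  show "frame_mat R a w b w' \<in> SL2 R"
    using frame_mat_SL2 assms(1-6) .
  show "map (mat_act R (frame_mat R a w b w')) xs = ys"
  proof (rule nth_equalityI)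
    fix i assume "i < length (map (mat_act R (frame_mat R a w b w')) xs)"
    then have i: "i < length xs" by simp
    have "xs ! i \<in> plane R" "ys ! i \<in> plane R"
      using assms(7-9) i by auto
    then show "map (mat_act R (frame_mat R a w b w')) xs ! i = ys ! i"
      using mat_act_frame_mat[OF assms(1-4)] frame_coords[OF assms(3,4) _ assms(6)] assms(10)[OF i] i
      by simp
  qed (use assms(9) in simp)
qed

lemma unimodular_if_unit_coord:
  assumes a: "a \<in> plane R" and u: "fst a \<in> Units R \<or> snd a \<in> Units R"
  shows "unimodular R a"
proof -
  obtain a1 a2 where e: "a = (a1, a2)" by (cases a)
  have c: "a1 \<in> carrier R" "a2 \<in> carrier R" using a e by (auto simp: plane_def)
  show ?thesis
  proof (cases "a1 \<in> Units R")
    case True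
    then have "dot_perp R a (\<zero>, inv a1) = \<one>"
      using e c by (simp add: dot_perp_def minus_eq)
    then show ?thesis
      using True by (auto simp: unimodular_def plane_def)
  next
    case False
    then have U: "a2 \<in> Units R" using u e by simp
    have "a1 \<otimes> \<zero> \<ominus> a2 \<otimes> (\<ominus> (inv a2)) = a2 \<otimes> inv a2"
      using U c by (simp add: minus_eq r_minus)
    then have "dot_perp R a (\<ominus> (inv a2), \<zero>) = \<one>"
      using U e by (simp add: dot_perp_def)
    then show ?thesis
      using U by (auto simp: unimodular_def plane_def)
  qed
qed

lemma card_dot_perp_in_le:
  assumes fin: "finite (carrier R)" and a: "a \<in> plane R" and w: "w \<in> plane R" "dot_perp R a w = \<one>"
  shows "card {b\<in>plane R. dot_perp R a b \<in> S} \<le> card (carrier R) * card (carrier R \<inter> S)"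
proof -
  let ?B = "{b\<in>plane R. dot_perp R a b \<in> S}"
  have "inj_on (\<lambda>b. (dot_perp R b w, dot_perp R a b)) ?B"
  proof (rule inj_onI)
    fix x y assume x: "x \<in> ?B" and y: "y \<in> ?B"
      and "(dot_perp R x w, dot_perp R a x) = (dot_perp R y w, dot_perp R a y)"
    then have eqs: "dot_perp R x w = dot_perp R y w" "dot_perp R a x = dot_perp R a y"
      by simp_all
    have "x = (dot_perp R x w \<otimes> fst a \<oplus> dot_perp R a x \<otimes> fst w, dot_perp R x w \<otimes> snd a \<oplus> dot_perp R a x \<otimes> snd w)"
      using x by (intro frame_coords[OF a w(1) _ w(2)]) simp
    also have "\<dots> = y"
      unfolding eqs using y by (intro frame_coords[OF a w(1) _ w(2), symmetric]) simp
    finally show "x = y" .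
  qed
  moreover have "(\<lambda>b. (dot_perp R b w, dot_perp R a b)) ` ?B \<subseteq> carrier R \<times> (carrier R \<inter> S)"
    using a w(1) by (auto intro: dot_perp_closed)
  ultimately have "card ?B \<le> card (carrier R \<times> (carrier R \<inter> S))"
    by (rule card_inj_on_le) (use fin in auto)
  then show ?thesis by (simp add: card_cartesian_product)
qed

end

section \<open>Tuples starting with a frame\<close>

definition config_bound :: "real \<Rightarrow> nat \<Rightarrow> ('a, 'b) ring_scheme \<Rightarrow> ('a \<times> 'a) set \<Rightarrow> bool" where
  "config_bound C n R E \<longleftrightarrow>
    real (card E) ^ (2 * n) \<le> C * real (card (config_classes R n E)) * (\<Sum>g\<in>SL2 R. fE R E g ^ n)"

lemma config_bound_mono:
  assumes "config_bound X n R E" "X \<le> C"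
  shows "config_bound C n R E"
proof -
  have "X * real (card (config_classes R n E)) * (\<Sum>g\<in>SL2 R. fE R E g ^ n)
      \<le> C * real (card (config_classes R n E)) * (\<Sum>g\<in>SL2 R. fE R E g ^ n)"
    using assms(2) sum_fE_power_nonneg[of R E n] by (intro mult_right_mono) simp_all
  then show ?thesis
    using assms(1) unfolding config_bound_def by linarith
qed

context cring
begin

lemma card_pow_le_sum_fE:
  assumes fin: "finite (carrier R)" and EP: "E \<subseteq> plane R"
  shows "real (card E) ^ m \<le> (\<Sum>g\<in>SL2 R. fE R E g ^ m)"
proof -
  define id2 where "id2 = ((\<one>\<^bsub>R\<^esub>, \<zero>\<^bsub>R\<^esub>), (\<zero>\<^bsub>R\<^esub>, \<one>\<^bsub>R\<^esub>))"
  have "id2 \<in> SL2 R"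
    by (simp add: id2_def SL2_def minus_eq)
  moreover have "{x\<in>E. mat_act R id2 x \<in> E} = E"
    using EP by (auto simp: id2_def mat_act_def plane_def)
  then have "fE R E id2 = real (card E)"
    using fE_eq_card[OF fin EP, of id2] by simp
  moreover have "fE R E id2 ^ m \<le> (\<Sum>g\<in>SL2 R. fE R E g ^ m)"
    using \<open>id2 \<in> SL2 R\<close> finite_SL2[OF fin] by (intro member_le_sum) (auto simp: fE_nonneg)
  ultimately show ?thesis
    by simp
qed

lemma config_bound_trivial:
  assumes fin: "finite (carrier R)" and EP: "E \<subseteq> plane R" and n: "n \<ge> 1"
  shows "config_bound (real (card (carrier R)) ^ (2 * n)) n R E"
proof (cases "E = {}")
  case True
  have "0 \<le> real (card (carrier R)) ^ (2 * n) * real (card (config_classes R n E)) * (\<Sum>g\<in>SL2 R. fE R E g ^ n)"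
    by (intro mult_nonneg_nonneg sum_fE_power_nonneg) simp_all
  then show ?thesis
    using True n by (simp add: power_0_left config_bound_def)
next
  case False
  have fE: "finite E" using EP finite_plane[OF fin] finite_subset by blast
  have "card (config_classes R n E) > 0"
    using config_classes_nonempty[OF False, of R n] finite_config_classes[OF fE, of R n] by (simp add: card_gt_0_iff)
  then have "1 \<le> real (card (config_classes R n E))"
    by simp
  then have "(\<Sum>g\<in>SL2 R. fE R E g ^ n) \<le> real (card (config_classes R n E)) * (\<Sum>g\<in>SL2 R. fE R E g ^ n)"
    using sum_fE_power_nonneg[of R E n] by (simp add: mult_le_cancel_right1)
  then have "real (card E) ^ n \<le> real (card (config_classes R n E)) * (\<Sum>g\<in>SL2 R. fE R E g ^ n)"
    using card_pow_le_sum_fE[OF fin EP, of n] by linarith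
  moreover have "real (card E) ^ n \<le> real (card (carrier R)) ^ (2 * n)"
    using card_mono[OF finite_plane[OF fin] EP] power_mono[of "real (card E)" "real (card (carrier R))^2" n]
    by (simp add: card_plane power_mult)
  ultimately have "real (card E) ^ n * real (card E) ^ n
    \<le> real (card (carrier R)) ^ (2 * n) * (real (card (config_classes R n E)) * (\<Sum>g\<in>SL2 R. fE R E g ^ n))"
    by (intro mult_mono) auto
  then show ?thesis
    by (simp add: mult_2 power_add mult.assoc config_bound_def)
qed

lemma card_nonunit_line_le:
  assumes fin: "finite (carrier R)" and EP: "E \<subseteq> plane R" and a: "a \<in> plane R" "unimodular R a"
  shows "card {b\<in>E. dot_perp R a b \<notin> Units R} \<le> card (carrier R) * card (carrier R - Units R)"
proof -
  from a(2) obtain w where w: "w \<in> plane R" "dot_perp R a w = \<one>"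
    unfolding unimodular_def by blast
  have "card {b\<in>E. dot_perp R a b \<notin> Units R} \<le> card {b\<in>plane R. dot_perp R a b \<in> - Units R}"
    using EP finite_plane[OF fin] by (intro card_mono) auto
  also have "\<dots> \<le> card (carrier R) * card (carrier R \<inter> - Units R)"
    by (rule card_dot_perp_in_le[OF fin a(1) w])
  finally show ?thesis
    by (simp add: Diff_eq)
qed

lemma card_not_unimodular_le:
  assumes fin: "finite (carrier R)" and EP: "E \<subseteq> plane R"
  shows "card {a\<in>E. \<not> unimodular R a} \<le> card (carrier R - Units R) ^ 2"
proof -
  have "{a\<in>E. \<not> unimodular R a} \<subseteq> (carrier R - Units R) \<times> (carrier R - Units R)"
  proof
    fix a assume "a \<in> {a\<in>E. \<not> unimodular R a}"
    then have "a \<in> plane R" "\<not> unimodular R a" using EP by auto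
    then show "a \<in> (carrier R - Units R) \<times> (carrier R - Units R)"
      using unimodular_if_unit_coord by (cases a) (auto simp: plane_def)
  qed
  then show ?thesis
    using card_mono[of "(carrier R - Units R) \<times> (carrier R - Units R)"] fin
    by (simp add: card_cartesian_product power2_eq_square)
qed

lemma card_nonunit_pairs_le:
  assumes fin: "finite (carrier R)" and EP: "E \<subseteq> plane R"
  shows "card {q\<in>E \<times> E. dot_perp R (fst q) (snd q) \<notin> Units R}
     \<le> card E * card (carrier R) * card (carrier R - Units R)
       + card (carrier R - Units R)^2 * card (carrier R)^2"
proof -
  let ?N = "card (carrier R)" and ?n = "card (carrier R - Units R)"
  let ?line = "\<lambda>a. {b\<in>E. dot_perp R a b \<notin> Units R}"
  have fE: "finite E" using EP finite_plane[OF fin] finite_subset by blast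
  define E1 where "E1 = {a\<in>E. unimodular R a}"
  define E2 where "E2 = {a\<in>E. \<not> unimodular R a}"
  have "{q\<in>E \<times> E. dot_perp R (fst q) (snd q) \<notin> Units R} = Sigma E1 ?line \<union> Sigma E2 ?line"
    by (auto simp: E1_def E2_def)
  then have "card {q\<in>E \<times> E. dot_perp R (fst q) (snd q) \<notin> Units R} \<le> card (Sigma E1 ?line) + card (Sigma E2 ?line)"
    by (simp add: card_Un_le)
  moreover have "card (Sigma E1 ?line) = (\<Sum>a\<in>E1. card (?line a))"
    using fE by (intro card_SigmaI) (auto simp: E1_def)
  then have "card (Sigma E1 ?line) \<le> card E1 * (?N * ?n)"
    using sum_bounded_above[of E1 "\<lambda>a. card (?line a)" "?N * ?n"] card_nonunit_line_le[OF fin EP] EP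
    by (auto simp: E1_def)
  then have "card (Sigma E1 ?line) \<le> card E * ?N * ?n"
    using card_mono[OF fE, of E1] by (auto simp: E1_def mult.assoc intro: le_trans mult_le_mono1)
  moreover have "card (Sigma E2 ?line) \<le> card (E2 \<times> plane R)"
    using EP fE finite_plane[OF fin] by (intro card_mono) (auto simp: E2_def)
  then have "card (Sigma E2 ?line) \<le> ?n^2 * ?N^2"
    using card_not_unimodular_le[OF fin EP]
    by (simp add: E2_def card_cartesian_product card_plane) (meson le_trans mult_le_mono1)
  ultimately show ?thesis by linarith
qed

lemma few_nonunit_pairs:
  assumes fin: "finite (carrier R)" and EP: "E \<subseteq> plane R"
    and dense: "4 * (card (carrier R) * card (carrier R - Units R)) \<le> card E"
  shows "2 * card {q\<in>E \<times> E. dot_perp R (fst q) (snd q) \<notin> Units R} \<le> card E ^ 2"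
proof -
  define M where "M = card E"
  define X where "X = card (carrier R) * card (carrier R - Units R)"
  have "card {q\<in>E \<times> E. dot_perp R (fst q) (snd q) \<notin> Units R} \<le> M * X + X * X"
    using card_nonunit_pairs_le[OF fin EP] by (simp add: M_def X_def power2_eq_square mult_ac)
  moreover have "4 * X \<le> M"
    using dense by (simp add: M_def X_def)
  then have "4 * (M * X) \<le> M * M" "16 * (X * X) \<le> M * M"
    using mult_le_mono[of "4 * X" M "4 * X" M] by simp_all
  ultimately have "2 * card {q\<in>E \<times> E. dot_perp R (fst q) (snd q) \<notin> Units R} \<le> M * M"
    by linarith
  then show ?thesis
    by (simp add: M_def power2_eq_square)
qed

lemma SL2_maps_to_if_unit_first_pair:
  assumes EP: "E \<subseteq> plane R" and m: "m \<ge> 2"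
    and xs: "xs \<in> tuples m E" "dot_perp R (xs ! 0) (xs ! 1) \<in> Units R"
    and ys: "ys \<in> tuples m E" and equiv: "(xs, ys) \<in> tuple_equiv R m E"
  shows "SL2_maps_to R xs ys"
proof -
  have len: "length xs = m" "length ys = m" and pl: "set xs \<subseteq> plane R" "set ys \<subseteq> plane R"
    using xs ys EP by (auto simp: tuples_def)
  have eq: "dot_perp R (xs ! i) (xs ! j) = dot_perp R (ys ! i) (ys ! j)" if "i < m" "j < m" for i j
    using equiv that by (auto simp: tuple_equiv_def)
  have pt: "xs ! i \<in> plane R" "ys ! i \<in> plane R" if "i < m" for i
    using pl len that nth_mem[of i xs] nth_mem[of i ys] by auto
  define d where "d = dot_perp R (xs ! 0) (xs ! 1)"
  have d: "d \<in> Units R" "dot_perp R (ys ! 0) (ys ! 1) = d"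
    using xs eq[of 0 1] m by (auto simp: d_def)
  then have e: "inv d \<in> carrier R" "inv d \<otimes> d = \<one>" by auto
  have pt01: "xs ! 0 \<in> plane R" "ys ! 0 \<in> plane R" "xs ! 1 \<in> plane R" "ys ! 1 \<in> plane R"
    using pt m by auto
  show ?thesis
  proof (rule SL2_maps_to_if_frame_coords[of "xs ! 0" "plane_scale R (inv d) (xs ! 1)"
        "ys ! 0" "plane_scale R (inv d) (ys ! 1)"])
    show "plane_scale R (inv d) (xs ! 1) \<in> plane R" "plane_scale R (inv d) (ys ! 1) \<in> plane R"
      using pt01 e by (simp_all add: plane_scale_closed)
    show "dot_perp R (xs ! 0) (plane_scale R (inv d) (xs ! 1)) = \<one>"
      "dot_perp R (ys ! 0) (plane_scale R (inv d) (ys ! 1)) = \<one>"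
      using pt01 e d(2) by (simp_all add: dot_perp_scale_right d_def)
    fix i assume "i < length xs"
    then show "dot_perp R (xs ! i) (plane_scale R (inv d) (xs ! 1)) = dot_perp R (ys ! i) (plane_scale R (inv d) (ys ! 1))
        \<and> dot_perp R (xs ! 0) (xs ! i) = dot_perp R (ys ! 0) (ys ! i)"
      using eq[of i 1] eq[of 0 i] pt[of i] pt01 e m len by (simp add: dot_perp_scale_right)
  qed (use pt01 len pl in simp_all)
qed

lemma config_bound_if_few_nonunit_pairs:
  assumes fin: "finite (carrier R)" and EP: "E \<subseteq> plane R" and m: "m \<ge> 2"
    and few: "2 * card {q\<in>E \<times> E. dot_perp R (fst q) (snd q) \<notin> Units R} \<le> card E ^ 2"
  shows "config_bound 4 m R E"
proof -
  have fE: "finite E" using EP finite_plane[OF fin] finite_subset by blast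
  define G where "G = {xs\<in>tuples m E. dot_perp R (xs ! 0) (xs ! 1) \<in> Units R}"
  have cs: "real (card G)^2 \<le> real (card {()}) * real (card (config_classes R m E)) * (\<Sum>g\<in>SL2 R. fE R E g ^ m)"
    by (intro card_sq_le_via_orbit_labels[OF fin EP, where \<tau>="\<lambda>_. ()"])
      (auto simp: G_def intro: SL2_maps_to_if_unit_first_pair[OF EP m])
  have "tuples m E - G = {xs\<in>tuples m E. dot_perp R (xs ! 0) (xs ! 1) \<notin> Units R}"
    by (auto simp: G_def)
  then have "card (tuples m E - G) \<le> card {q\<in>E \<times> E. dot_perp R (fst q) (snd q) \<notin> Units R} * card E ^ (m - 2)"
    using card_tuples_filter_first_two_le[OF fE m, of "\<lambda>a b. dot_perp R a b \<notin> Units R"] by simp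
  then have "2 * card (tuples m E - G)
      \<le> (2 * card {q\<in>E \<times> E. dot_perp R (fst q) (snd q) \<notin> Units R}) * card E ^ (m - 2)"
    by simp
  also have "\<dots> \<le> card E ^ 2 * card E ^ (m - 2)"
    using few by (rule mult_le_mono1)
  also have "\<dots> = card (tuples m E)"
    using m by (metis card_tuples[OF fE] power_add le_add_diff_inverse)
  finally have "card (tuples m E) \<le> 2 * card G"
    by (rule card_le_twice_if_diff_small) (auto simp: G_def finite_tuples[OF fE])
  then have "card E ^ m \<le> 2 * card G"
    by (simp add: card_tuples[OF fE])
  then have "real (card E ^ m) \<le> real (2 * card G)"
    by (simp only: of_nat_le_iff)
  then have half: "real (card E) ^ m \<le> 2 * real (card G)"
    by simp
  show ?thesis
    unfolding config_bound_def using power_two_mult_le[OF of_nat_0_le_iff half cs] by simp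
qed

end

lemma (in field) config_bound_dense_field:
  assumes fin: "finite (carrier R)" and EP: "E \<subseteq> plane R" and n: "n \<ge> 2"
    and dense: "4 * card (carrier R) \<le> card E"
  shows "config_bound 4 n R E"
proof (rule config_bound_if_few_nonunit_pairs[OF fin EP n], rule few_nonunit_pairs[OF fin EP])
  have "carrier R - Units R = {\<zero>}"
    by (auto simp: field_Units)
  then show "4 * (card (carrier R) * card (carrier R - Units R)) \<le> card E"
    using dense by simp
qed

section \<open>Valuation classes in \<open>\<int>/p\<^sup>l\<close>\<close>

definition content_val :: "int \<Rightarrow> int \<times> int \<Rightarrow> nat" where
  "content_val p z = multiplicity p (gcd (fst z) (snd z))"

definition prim_part :: "int \<Rightarrow> int \<times> int \<Rightarrow> int \<times> int" where
  "prim_part p z = (fst z div p ^ content_val p z, snd z div p ^ content_val p z)"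

lemma content_val_props:
  fixes p :: int
  assumes p: "prime p" and nd: "\<not> (p ^ V dvd fst z \<and> p ^ V dvd snd z)"
  shows "content_val p z < V"
    and "p ^ content_val p z dvd fst z" "p ^ content_val p z dvd snd z"
    and "\<not> (p dvd fst (prim_part p z) \<and> p dvd snd (prim_part p z))"
proof -
  let ?j = "content_val p z"
  have "gcd (fst z) (snd z) \<noteq> 0" "\<not> is_unit p"
    using nd p by (auto simp: not_prime_unit)
  then have dvd_iff: "p ^ i dvd fst z \<and> p ^ i dvd snd z \<longleftrightarrow> i \<le> ?j" for i
    using power_dvd_iff_le_multiplicity[of "gcd (fst z) (snd z)" p i] by (simp add: content_val_def)
  show "?j < V" "p ^ ?j dvd fst z" "p ^ ?j dvd snd z"
    using dvd_iff[of V] dvd_iff[of ?j] nd by auto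
  show "\<not> (p dvd fst (prim_part p z) \<and> p dvd snd (prim_part p z))"
  proof
    assume "p dvd fst (prim_part p z) \<and> p dvd snd (prim_part p z)"
    moreover have "p ^ ?j \<noteq> 0" using p by (simp add: prime_gt_0_int)
    ultimately have "p * p ^ ?j dvd fst z \<and> p * p ^ ?j dvd snd z"
      using \<open>p ^ ?j dvd fst z\<close> \<open>p ^ ?j dvd snd z\<close> by (simp add: prim_part_def dvd_div_iff_mult)
    then show False
      using dvd_iff[of "Suc ?j"] by simp
  qed
qed

lemma multiplicity_less_if_not_dvd:
  fixes p :: int
  assumes "prime p" "\<not> p ^ V dvd t"
  shows "multiplicity p t < V" "p ^ multiplicity p t dvd t" "\<not> p ^ Suc (multiplicity p t) dvd t"
proof -
  have "t \<noteq> 0" "\<not> is_unit p"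
    using assms by (auto simp: not_prime_unit)
  then have iff: "p ^ i dvd t \<longleftrightarrow> i \<le> multiplicity p t" for i
    by (rule power_dvd_iff_le_multiplicity)
  show "multiplicity p t < V" using iff[of V] assms(2) by simp
  show "p ^ multiplicity p t dvd t" by (rule multiplicity_dvd)
  show "\<not> p ^ Suc (multiplicity p t) dvd t" using iff[of "Suc (multiplicity p t)"] by simp
qed

lemma prime_power_dvd_cancel:
  fixes p :: int
  assumes p: "prime p" and "p ^ v dvd b" "\<not> p ^ Suc v dvd b" "p ^ l dvd b * d" "v \<le> l"
  shows "p ^ (l - v) dvd d"
proof -
  obtain u where u: "b = p ^ v * u" using assms(2) by blast
  have "\<not> p dvd u"
    using assms(3) u by (auto simp: power_Suc2 intro: mult_dvd_mono)
  then have "coprime (p ^ (l - v)) u"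
    using p by (simp add: coprime_commute prime_imp_coprime)
  moreover have "p ^ v * p ^ (l - v) dvd p ^ v * (u * d)"
    using assms(4,5) u by (simp add: mult.assoc flip: power_add)
  then have "p ^ (l - v) dvd u * d"
    using p by (simp add: prime_gt_0_int)
  ultimately show ?thesis
    using coprime_dvd_mult_right_iff by blast
qed

lemma div_bounds:
  fixes z d a :: int
  assumes "0 < d" "0 \<le> z" "z < a * d"
  shows "0 \<le> z div d" "z div d < a"
proof -
  show "0 \<le> z div d" using assms by (simp add: pos_imp_zdiv_nonneg_iff)
  have "z div d * d + z mod d = z" "0 \<le> z mod d"
    using assms(1) by simp_all
  then have "z div d * d \<le> z"
    by linarith
  then show "z div d < a"
    using assms(1,3) by (meson le_less_trans mult_less_cancel_right_pos)
qed

definition reduced_dual :: "int ring \<Rightarrow> int \<Rightarrow> nat \<Rightarrow> int \<times> int \<Rightarrow> int \<times> int \<Rightarrow> int \<times> int" where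
  "reduced_dual R p v a z = (SOME w. w \<in> plane R \<and> dot_perp R a w = \<one>\<^bsub>R\<^esub> \<and> dot_perp R z w < p ^ v)"

definition valuation_class ::
    "int ring \<Rightarrow> int \<Rightarrow> nat \<Rightarrow> nat \<Rightarrow> nat \<Rightarrow> nat \<Rightarrow> (int \<times> int) set \<Rightarrow> (int \<times> int) list set" where
  "valuation_class R p V j v n E = {xs\<in>tuples n E.
      \<not> (p ^ V dvd fst (xs ! 0) \<and> p ^ V dvd snd (xs ! 0)) \<and> content_val p (xs ! 0) = j \<and>
      \<not> p ^ V dvd dot_perp R (prim_part p (xs ! 0)) (xs ! 1) \<and>
      multiplicity p (dot_perp R (prim_part p (xs ! 0)) (xs ! 1)) = v}"

text \<open>With \<open>a = x\<^sub>0 / p\<^sup>j\<close> and \<open>w\<close> its reduced dual, the label records \<open>[x\<^sub>1, w]\<close> and the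
  top \<open>v\<close> resp. \<open>j\<close> base-\<open>p\<close> digits of the frame coordinates \<open>[x\<^sub>i, w]\<close> and \<open>[a, x\<^sub>i]\<close>;
  the configuration determines the remaining digits.\<close>
definition orbit_label :: "int ring \<Rightarrow> int \<Rightarrow> nat \<Rightarrow> nat \<Rightarrow> nat \<Rightarrow> (int \<times> int) list \<Rightarrow> int \<times> int list \<times> int list" where
  "orbit_label R p l j v xs =
    (let a = prim_part p (xs ! 0); w = reduced_dual R p v a (xs ! 1)
     in (dot_perp R (xs ! 1) w, map (\<lambda>z. dot_perp R z w div p ^ (l - v)) xs,
         map (\<lambda>z. dot_perp R a z div p ^ (l - j)) xs))"

definition label_set :: "int \<Rightarrow> nat \<Rightarrow> nat \<Rightarrow> nat \<Rightarrow> (int \<times> int list \<times> int list) set" where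
  "label_set p j v n = {0..<p ^ v} \<times> {ts. set ts \<subseteq> {0..<p ^ v} \<and> length ts = n}
     \<times> {ts. set ts \<subseteq> {0..<p ^ j} \<and> length ts = n}"

lemma finite_label_set: "finite (label_set p j v n)"
  by (simp add: label_set_def finite_lists_length_eq)

lemma card_label_set_le:
  assumes "p > 1" "j \<le> V" "v \<le> V"
  shows "card (label_set p j v n) \<le> nat p ^ (V * (2 * n + 1))"
proof -
  have "card (label_set p j v n) = nat p ^ v * (nat p ^ v) ^ n * (nat p ^ j) ^ n"
    using assms(1) by (simp add: label_set_def card_cartesian_product card_lists_length_eq nat_power_eq)
  also have "\<dots> \<le> nat p ^ V * (nat p ^ V) ^ n * (nat p ^ V) ^ n"
    using assms by (intro mult_le_mono power_mono power_increasing) auto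
  also have "\<dots> = nat p ^ (V + V * n + V * n)"
    by (simp only: power_add power_mult)
  also have "V + V * n + V * n = V * (2 * n + 1)"
    by (simp add: algebra_simps)
  finally show ?thesis .
qed

lemma mult_sq_add_le_twice_sq:
  fixes t P N :: real
  assumes "t * P \<le> N" "1 \<le> t" "0 \<le> P"
  shows "t * (P^2 + N * P) \<le> 2 * N^2"
proof -
  have "P \<le> t * P"
    using mult_right_mono[OF assms(2,3)] by simp
  then have "P \<le> N" "0 \<le> N"
    using assms(1,3) by linarith+
  have "t * P^2 \<le> N * P"
    using mult_right_mono[OF assms(1,3)] by (simp add: power2_eq_square mult.assoc)
  moreover have "N * P \<le> N * N"
    using \<open>P \<le> N\<close> \<open>0 \<le> N\<close> by (rule mult_left_mono)
  moreover have "t * (N * P) \<le> N * N"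
    using mult_left_mono[OF assms(1) \<open>0 \<le> N\<close>] by (simp add: mult_ac)
  ultimately show ?thesis
    by (simp add: distrib_left power2_eq_square)
qed

context residues
begin

lemma in_carrier: "z \<in> carrier R \<longleftrightarrow> 0 \<le> z \<and> z < m"
  by (auto simp: res_carrier_eq)

lemma card_carrier: "card (carrier R) = nat m"
  using m_gt_one by (simp add: res_carrier_eq)

lemma card_carrier_prime_power: "prime p \<Longrightarrow> m = p ^ l \<Longrightarrow> card (carrier R) = nat p ^ l"
  by (simp add: card_carrier nat_power_eq prime_ge_0_int)

lemma res_minus: "x \<ominus> y = (x - y) mod m"
  by (simp add: a_minus_def res_add_eq res_neg_eq mod_add_right_eq)

lemma div_in_carrier:
  assumes "z \<in> carrier R" "0 < d"
  shows "z div d \<in> carrier R"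
proof -
  have "0 \<le> z" "z < m" using assms(1) by (simp_all add: in_carrier)
  moreover have "m * 1 \<le> m * d" using assms(2) m_gt_one by (intro mult_left_mono) auto
  ultimately have "z < m * d" by linarith
  then show ?thesis
    using div_bounds[OF assms(2) \<open>0 \<le> z\<close>, of m] by (simp add: in_carrier)
qed

lemma unit_if_not_dvd:
  assumes p: "prime p" and mp: "m = p ^ l" and z: "z \<in> carrier R" and nd: "\<not> p dvd z"
  shows "z \<in> Units R"
proof -
  have "0 < z" "z < m"
    using z nd by (auto simp: in_carrier order_le_less)
  moreover have "coprime z m"
    using nd p mp by (simp add: prime_imp_coprime coprime_commute)
  ultimately show ?thesis by (simp add: res_units_eq)
qed

lemma card_multiples_le:
  assumes p: "prime p" and mp: "m = p ^ l" and V: "V \<le> l"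
  shows "card {t\<in>carrier R. p ^ V dvd t} \<le> nat p ^ (l - V)"
proof -
  have p1: "p > 1" using p prime_gt_1_int by blast
  have "{t\<in>carrier R. p ^ V dvd t} \<subseteq> (\<lambda>s. p ^ V * s) ` {0..<p ^ (l - V)}"
  proof
    fix t assume t: "t \<in> {t\<in>carrier R. p ^ V dvd t}"
    then obtain s where s: "t = p ^ V * s" by blast
    have "0 \<le> t" "t < p ^ V * p ^ (l - V)"
      using t mp V by (auto simp: in_carrier simp flip: power_add)
    moreover have "0 < p ^ V" using p1 by simp
    ultimately have "0 \<le> s" "s < p ^ (l - V)"
      using s by (auto simp: zero_le_mult_iff)
    then show "t \<in> (\<lambda>s. p ^ V * s) ` {0..<p ^ (l - V)}" using s by auto
  qed
  then have "card {t\<in>carrier R. p ^ V dvd t} \<le> card ((\<lambda>s. p ^ V * s) ` {0..<p ^ (l - V)})"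
    by (intro card_mono) auto
  also have "\<dots> \<le> card {0..<p ^ (l - V)}" by (rule card_image_le) simp
  also have "\<dots> = nat p ^ (l - V)" using p1 by (simp add: nat_power_eq)
  finally show ?thesis .
qed

lemma card_nonunits_le:
  assumes p: "prime p" and mp: "m = p ^ l" and l: "l \<ge> 1"
  shows "card (carrier R - Units R) \<le> nat p ^ (l - 1)"
proof -
  have "carrier R - Units R \<subseteq> {t\<in>carrier R. p ^ 1 dvd t}"
    using unit_if_not_dvd[OF p mp] by auto
  then have "card (carrier R - Units R) \<le> card {t\<in>carrier R. p ^ 1 dvd t}"
    by (intro card_mono) auto
  also have "\<dots> \<le> nat p ^ (l - 1)"
    by (rule card_multiples_le[OF p mp l])
  finally show ?thesis .
qed

lemma unimodular_if_coprime_coords: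
  assumes p: "prime p" and mp: "m = p ^ l" and a: "a \<in> plane R" and prim: "\<not> (p dvd fst a \<and> p dvd snd a)"
  shows "unimodular R a"
  using prim a unit_if_not_dvd[OF p mp] by (intro unimodular_if_unit_coord) (auto simp: plane_def)

lemma prim_part_props:
  assumes p: "prime p" and mp: "m = p ^ l" and V: "V \<le> l" and z: "z \<in> plane R"
    and nd: "\<not> (p ^ V dvd fst z \<and> p ^ V dvd snd z)"
  shows "prim_part p z \<in> plane R" "unimodular R (prim_part p z)"
    "p ^ content_val p z \<in> carrier R" "plane_scale R (p ^ content_val p z) (prim_part p z) = z"
proof -
  let ?j = "content_val p z"
  note j = content_val_props[OF p nd]
  have p1: "p > 1" using p prime_gt_1_int by blast
  show pp: "prim_part p z \<in> plane R"
    using z p1 by (auto simp: prim_part_def plane_def intro!: div_in_carrier)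
  show "unimodular R (prim_part p z)"
    by (rule unimodular_if_coprime_coords[OF p mp pp j(4)])
  have "p ^ ?j < p ^ l"
    using j(1) V p1 by (simp add: power_strict_increasing)
  then show "p ^ ?j \<in> carrier R"
    using p1 mp by (simp add: in_carrier)
  show "plane_scale R (p ^ ?j) (prim_part p z) = z"
    using j(2,3) z by (cases z) (simp add: plane_scale_def prim_part_def res_mult_eq plane_def in_carrier)
qed

lemma res_minus_div_mult:
  assumes "0 < d" "d < m"
  shows "x \<ominus> (x div d) \<otimes> d = x mod d"
proof -
  have "x \<ominus> (x div d) \<otimes> d = (x - x div d * d) mod m"
    by (simp add: res_minus res_mult_eq mod_diff_right_eq)
  also have "x - x div d * d = x mod d"
    by (simp add: minus_div_mult_eq_mod)
  also have "x mod d mod m = x mod d"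
    using assms pos_mod_bound[of d x] pos_mod_sign[of d x] by (intro mod_pos_pos_trivial) linarith+
  finally show ?thesis .
qed

lemma unit_div_prime_power:
  assumes p: "prime p" and mp: "m = p ^ l" and b: "b \<in> carrier R"
    and "p ^ v dvd b" "\<not> p ^ Suc v dvd b"
  shows "b div p ^ v \<in> Units R"
proof (rule unit_if_not_dvd[OF p mp])
  show "b div p ^ v \<in> carrier R"
    using b prime_gt_0_int[OF p] by (simp add: div_in_carrier)
  show "\<not> p dvd b div p ^ v"
    using assms(4,5) prime_gt_0_int[OF p] by (simp add: dvd_div_iff_mult)
qed

text \<open>Moving \<open>w\<close> along \<open>a\<close> shifts \<open>[z, w]\<close> by multiples of \<open>[z, a] = -p\<^sup>v u\<close> with \<open>u\<close> a unit,
  so \<open>[z, w]\<close> can be reduced modulo \<open>p\<^sup>v\<close> while keeping \<open>[a, w] = 1\<close>.\<close>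
lemma exists_reduced_dual:
  assumes p: "prime p" and mp: "m = p ^ l" and vl: "v < l"
    and a: "a \<in> plane R" "unimodular R a" and z: "z \<in> plane R"
    and d1: "p ^ v dvd dot_perp R a z" and d2: "\<not> p ^ Suc v dvd dot_perp R a z"
  shows "\<exists>w\<in>plane R. dot_perp R a w = \<one> \<and> dot_perp R z w < p ^ v"
proof -
  have p1: "p > 1" using p prime_gt_1_int by blast
  have pv: "0 < p ^ v" "p ^ v < m" using p1 mp vl by (simp_all add: power_strict_increasing)
  let ?b = "dot_perp R a z"
  define u where "u = ?b div p ^ v"
  have b: "?b \<in> carrier R" using dot_perp_closed a z by simp
  have bu: "?b = p ^ v * u" using d1 by (simp add: u_def)
  have uc: "u \<in> carrier R" using div_in_carrier[OF b pv(1)] by (simp add: u_def)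
  have uU: "u \<in> Units R" using unit_div_prime_power[OF p mp b d1 d2] by (simp add: u_def)
  obtain w0 where w0: "w0 \<in> plane R" "dot_perp R a w0 = \<one>"
    using a(2) by (auto simp: unimodular_def)
  define al where "al = dot_perp R z w0"
  have al: "al \<in> carrier R" using dot_perp_closed[OF z w0(1)] by (simp add: al_def)
  define q where "q = al div p ^ v"
  have qc: "q \<in> carrier R" using div_in_carrier[OF al pv(1)] by (simp add: q_def)
  define t where "t = q \<otimes> inv u"
  have tc: "t \<in> carrier R" using qc uU by (simp add: t_def)
  define w where "w = (fst w0 \<oplus> t \<otimes> fst a, snd w0 \<oplus> t \<otimes> snd a)"
  have wp: "w \<in> plane R" using w0 a tc by (auto simp: w_def plane_def)
  have aw: "dot_perp R a w = \<one>"
    unfolding w_def using dot_perp_add_multiple[OF a(1) w0(1) a(1) tc] w0 dot_perp_self[OF a(1)] tc by simp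
  have pvc: "p ^ v \<in> carrier R" using pv by (simp add: in_carrier)
  have "dot_perp R z w = al \<oplus> t \<otimes> dot_perp R z a"
    unfolding w_def al_def by (rule dot_perp_add_multiple[OF a(1) w0(1) z tc])
  also have "dot_perp R z a = \<ominus> (p ^ v \<otimes> u)"
    using dot_perp_swap[OF a(1) z] bu b pv by (simp add: res_mult_eq in_carrier)
  also have "t \<otimes> \<ominus> (p ^ v \<otimes> u) = \<ominus> (q \<otimes> p ^ v \<otimes> (inv u \<otimes> u))"
    unfolding t_def using qc pvc uc Units_inv_closed[OF uU] by algebra
  also have "q \<otimes> p ^ v \<otimes> (inv u \<otimes> u) = q \<otimes> p ^ v"
    using uU qc pvc by simp
  also have "al \<oplus> \<ominus> (q \<otimes> p ^ v) = al mod p ^ v"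
    unfolding q_def a_minus_def[symmetric] by (rule res_minus_div_mult[OF pv])
  finally have "dot_perp R z w < p ^ v"
    using pv by simp
  then show ?thesis using wp aw by blast
qed

lemma eq_if_mult_eq_div_eq:
  assumes p: "prime p" and mp: "m = p ^ l" and "v \<le> l" "p ^ v dvd b" "\<not> p ^ Suc v dvd b"
    and "b \<otimes> x = b \<otimes> y" "x div p ^ (l - v) = y div p ^ (l - v)"
  shows "x = y"
proof -
  have "p ^ l dvd b * (x - y)"
    using assms(6) mp by (simp add: res_mult_eq mod_eq_dvd_iff right_diff_distrib)
  then have "p ^ (l - v) dvd x - y"
    using prime_power_dvd_cancel[OF p assms(4,5)] assms(3) by blast
  then show ?thesis
    using assms(7) by (metis div_mult_mod_eq mod_eq_dvd_iff)
qed

lemma valuation_class_frame: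
  assumes p: "prime p" and mp: "m = p ^ l" and V: "V \<le> l" and EP: "E \<subseteq> plane R" and n: "n \<ge> 2"
    and xs: "xs \<in> valuation_class R p V j v n E"
  defines "a \<equiv> prim_part p (xs ! 0)"
  defines "w \<equiv> reduced_dual R p v a (xs ! 1)"
  shows "length xs = n" "set xs \<subseteq> plane R" "j < V" "v < V"
    and "a \<in> plane R" "p ^ j \<in> carrier R" "plane_scale R (p ^ j) a = xs ! 0"
    and "p ^ v dvd dot_perp R a (xs ! 1)" "\<not> p ^ Suc v dvd dot_perp R a (xs ! 1)"
    and "w \<in> plane R" "dot_perp R a w = \<one>" "dot_perp R (xs ! 1) w < p ^ v"
proof -
  have len: "length xs = n" and E: "set xs \<subseteq> E"
    and nd0: "\<not> (p ^ V dvd fst (xs ! 0) \<and> p ^ V dvd snd (xs ! 0))" and j: "content_val p (xs ! 0) = j"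
    and nd1: "\<not> p ^ V dvd dot_perp R a (xs ! 1)" and v: "multiplicity p (dot_perp R a (xs ! 1)) = v"
    using xs by (auto simp: valuation_class_def tuples_def a_def)
  show "length xs = n" "set xs \<subseteq> plane R" using len E EP by auto
  have "xs ! 0 \<in> set xs" "xs ! 1 \<in> set xs"
    using len n by simp_all
  then have x01: "xs ! 0 \<in> plane R" "xs ! 1 \<in> plane R"
    using E EP by auto
  show "j < V" using content_val_props(1)[OF p nd0] j by simp
  show "v < V" "p ^ v dvd dot_perp R a (xs ! 1)" "\<not> p ^ Suc v dvd dot_perp R a (xs ! 1)"
    using multiplicity_less_if_not_dvd[OF p nd1] v by auto
  note prim = prim_part_props[OF p mp V x01(1) nd0, folded a_def, unfolded j]
  show "a \<in> plane R" "p ^ j \<in> carrier R" "plane_scale R (p ^ j) a = xs ! 0"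
    using prim by auto
  have "\<exists>w\<in>plane R. dot_perp R a w = \<one> \<and> dot_perp R (xs ! 1) w < p ^ v"
    using exists_reduced_dual[OF p mp _ prim(1,2) x01(2)] multiplicity_less_if_not_dvd[OF p nd1] v V
    by auto
  then show "w \<in> plane R" "dot_perp R a w = \<one>" "dot_perp R (xs ! 1) w < p ^ v"
    unfolding w_def reduced_dual_def by (metis (mono_tags, lifting) someI_ex)+
qed

lemma SL2_maps_to_if_same_label:
  assumes p: "prime p" and mp: "m = p ^ l" and V: "V \<le> l" and EP: "E \<subseteq> plane R" and n: "n \<ge> 2"
    and xs: "xs \<in> valuation_class R p V j v n E" and ys: "ys \<in> valuation_class R p V j v n E"
    and equiv: "(xs, ys) \<in> tuple_equiv R n E" and lab: "orbit_label R p l j v xs = orbit_label R p l j v ys"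
  shows "SL2_maps_to R xs ys"
proof -
  define a where "a = prim_part p (xs ! 0)"
  define b where "b = prim_part p (ys ! 0)"
  define w where "w = reduced_dual R p v a (xs ! 1)"
  define w' where "w' = reduced_dual R p v b (ys ! 1)"
  note fx = valuation_class_frame[OF p mp V EP n xs, folded a_def, folded w_def]
  note fy = valuation_class_frame[OF p mp V EP n ys, folded b_def, folded w'_def]
  have pt: "xs ! i \<in> plane R" "ys ! i \<in> plane R" if "i < n" for i
    using fx(1,2) fy(1,2) that nth_mem[of i xs] nth_mem[of i ys] by auto
  have eq: "dot_perp R (xs ! i) (xs ! i') = dot_perp R (ys ! i) (ys ! i')" if "i < n" "i' < n" for i i'
    using equiv that by (auto simp: tuple_equiv_def)
  have lab1: "dot_perp R (xs ! 1) w = dot_perp R (ys ! 1) w'"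
    and labs: "map (\<lambda>z. dot_perp R z w div p ^ (l - v)) xs = map (\<lambda>z. dot_perp R z w' div p ^ (l - v)) ys"
      "map (\<lambda>z. dot_perp R a z div p ^ (l - j)) xs = map (\<lambda>z. dot_perp R b z div p ^ (l - j)) ys"
    using lab by (simp_all add: orbit_label_def Let_def a_def b_def w_def w'_def)
  have lab2: "dot_perp R (xs ! i) w div p ^ (l - v) = dot_perp R (ys ! i) w' div p ^ (l - v)"
    and lab3: "dot_perp R a (xs ! i) div p ^ (l - j) = dot_perp R b (ys ! i) div p ^ (l - j)" if "i < n" for i
    using arg_cong[OF labs(1), of "\<lambda>ts. ts ! i"] arg_cong[OF labs(2), of "\<lambda>ts. ts ! i"] that fx(1) fy(1)
    by simp_all
  \<comment> \<open>\<open>[x\<^sub>0, x\<^sub>i] = p\<^sup>j [a, x\<^sub>i]\<close> fixes \<open>[a, x\<^sub>i]\<close> modulo \<open>p\<^sup>l\<^sup>-\<^sup>j\<close>; the label supplies the top digits\<close>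
  have along: "dot_perp R a (xs ! i) = dot_perp R b (ys ! i)" if i: "i < n" for i
  proof -
    have mult: "p ^ j \<otimes> dot_perp R a (xs ! i) = p ^ j \<otimes> dot_perp R b (ys ! i)"
      using eq[of 0 i] i n dot_perp_scale_left[of "p ^ j" a "xs ! i"] dot_perp_scale_left[of "p ^ j" b "ys ! i"]
        fx fy pt[OF i] by simp
    show ?thesis
      using fx(3) V p
      by (intro eq_if_mult_eq_div_eq[OF p mp _ _ _ mult lab3[OF i]]) (auto simp: dvd_power_iff not_prime_unit)
  qed
  \<comment> \<open>expanding \<open>[x\<^sub>1, x\<^sub>i]\<close> in the frame \<open>(a, w)\<close> fixes \<open>[a, x\<^sub>1] [x\<^sub>i, w]\<close>, and \<open>[a, x\<^sub>1]\<close> has valuation \<open>v\<close>\<close>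
  have across: "dot_perp R (xs ! i) w = dot_perp R (ys ! i) w'" if i: "i < n" for i
  proof -
    have 1: "1 < n" using n by simp
    have "dot_perp R (xs ! 1) w \<otimes> dot_perp R a (xs ! i) \<ominus> dot_perp R a (xs ! 1) \<otimes> dot_perp R (xs ! i) w
        = dot_perp R (xs ! 1) w \<otimes> dot_perp R a (xs ! i) \<ominus> dot_perp R a (xs ! 1) \<otimes> dot_perp R (ys ! i) w'"
      using dot_perp_frame_expand[OF fx(5,10) pt(1)[OF 1] pt(1)[OF i] fx(11)]
        dot_perp_frame_expand[OF fy(5,10) pt(2)[OF 1] pt(2)[OF i] fy(11)]
        eq[OF 1 i] lab1 along[OF i] along[OF 1] by simp
    then have mult: "dot_perp R a (xs ! 1) \<otimes> dot_perp R (xs ! i) w = dot_perp R a (xs ! 1) \<otimes> dot_perp R (ys ! i) w'"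
      by (rule minus_left_cancel[rotated 3]) (use fx fy pt[OF 1] pt[OF i] dot_perp_closed in auto)
    show ?thesis
      using fx(4,8,9) V by (intro eq_if_mult_eq_div_eq[OF p mp _ _ _ mult lab2[OF i]]) auto
  qed
  show ?thesis
    by (rule SL2_maps_to_if_frame_coords[OF fx(5,10) fy(5,10) fx(11) fy(11)])
      (use fx fy along across in auto)
qed

lemma orbit_label_in_label_set:
  assumes p: "prime p" and mp: "m = p ^ l" and V: "V \<le> l" and EP: "E \<subseteq> plane R" and n: "n \<ge> 2"
    and xs: "xs \<in> valuation_class R p V j v n E"
  shows "orbit_label R p l j v xs \<in> label_set p j v n"
proof -
  define a where "a = prim_part p (xs ! 0)"
  define w where "w = reduced_dual R p v a (xs ! 1)"
  note fx = valuation_class_frame[OF p mp V EP n xs, folded a_def, folded w_def]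
  have p1: "p > 1" using p prime_gt_1_int by blast
  have top_digits: "0 \<le> t div p ^ (l - u) \<and> t div p ^ (l - u) < p ^ u" if "t \<in> carrier R" "u \<le> l" for t u
    using that p1 mp div_bounds[of "p ^ (l - u)" t "p ^ u"] by (auto simp: in_carrier simp flip: power_add)
  have lab: "orbit_label R p l j v xs = (dot_perp R (xs ! 1) w, map (\<lambda>z. dot_perp R z w div p ^ (l - v)) xs,
      map (\<lambda>z. dot_perp R a z div p ^ (l - j)) xs)"
    by (simp add: orbit_label_def Let_def a_def w_def)
  have "xs ! 1 \<in> set xs" using fx(1) n by simp
  then have "dot_perp R (xs ! 1) w \<in> carrier R"
    using fx(2,10) by (auto intro: dot_perp_closed)
  moreover have "dot_perp R z w \<in> carrier R" "dot_perp R a z \<in> carrier R" if "z \<in> set xs" for z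
    using fx(2,5,10) that by (auto intro: dot_perp_closed)
  ultimately show ?thesis
    unfolding lab using fx(1,3,4,12) V top_digits by (auto simp: label_set_def in_carrier)
qed

lemma card_divisible_points_le:
  assumes p: "prime p" and mp: "m = p ^ l" and V: "V \<le> l" and EP: "E \<subseteq> plane R"
  shows "card {z\<in>E. p ^ V dvd fst z \<and> p ^ V dvd snd z} \<le> (nat p ^ (l - V))^2"
proof -
  let ?Dv = "{t\<in>carrier R. p ^ V dvd t}"
  have "{z\<in>E. p ^ V dvd fst z \<and> p ^ V dvd snd z} \<subseteq> ?Dv \<times> ?Dv"
    using EP by (auto simp: plane_def)
  then have "card {z\<in>E. p ^ V dvd fst z \<and> p ^ V dvd snd z} \<le> card ?Dv * card ?Dv"
    using card_mono[of "?Dv \<times> ?Dv"] finite by (simp add: card_cartesian_product)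
  also have "\<dots> \<le> (nat p ^ (l - V))^2"
    using card_multiples_le[OF p mp V] by (simp add: power2_eq_square mult_le_mono)
  finally show ?thesis .
qed

lemma card_divisible_dot_perp_pairs_le:
  assumes p: "prime p" and mp: "m = p ^ l" and V: "V \<le> l" and EP: "E \<subseteq> plane R"
  defines "deep \<equiv> \<lambda>z. p ^ V dvd fst z \<and> p ^ V dvd snd z"
  shows "card {q\<in>E \<times> E. \<not> deep (fst q) \<and> p ^ V dvd dot_perp R (prim_part p (fst q)) (snd q)}
    \<le> card E * card (carrier R) * nat p ^ (l - V)"
proof -
  have fE: "finite E" using EP finite_plane[OF finite] finite_subset by blast
  let ?Dv = "{t\<in>carrier R. p ^ V dvd t}"
  let ?line = "\<lambda>z. {y\<in>plane R. dot_perp R (prim_part p z) y \<in> ?Dv}"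
  have "{q\<in>E \<times> E. \<not> deep (fst q) \<and> p ^ V dvd dot_perp R (prim_part p (fst q)) (snd q)}
    \<subseteq> (SIGMA z:{z\<in>E. \<not> deep z}. ?line z)"
  proof (rule subsetI)
    fix q assume q: "q \<in> {q\<in>E \<times> E. \<not> deep (fst q) \<and> p ^ V dvd dot_perp R (prim_part p (fst q)) (snd q)}"
    then have q1: "fst q \<in> plane R" "\<not> deep (fst q)" and q2: "snd q \<in> plane R"
      using EP by auto
    then have "dot_perp R (prim_part p (fst q)) (snd q) \<in> carrier R"
      using prim_part_props(1)[OF p mp V q1(1)] by (intro dot_perp_closed) (auto simp: deep_def)
    then show "q \<in> (SIGMA z:{z\<in>E. \<not> deep z}. ?line z)"
      using q q2 by (cases q) auto
  qed
  then have "card {q\<in>E \<times> E. \<not> deep (fst q) \<and> p ^ V dvd dot_perp R (prim_part p (fst q)) (snd q)}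
      \<le> card (SIGMA z:{z\<in>E. \<not> deep z}. ?line z)"
    by (rule card_mono[rotated]) (use fE finite_plane[OF finite] in auto)
  also have "\<dots> = (\<Sum>z\<in>{z\<in>E. \<not> deep z}. card (?line z))"
    by (rule card_SigmaI) (use fE finite_plane[OF finite] in auto)
  also have "\<dots> \<le> (\<Sum>z\<in>{z\<in>E. \<not> deep z}. card (carrier R) * nat p ^ (l - V))"
  proof (rule sum_mono)
    fix z assume z: "z \<in> {z\<in>E. \<not> deep z}"
    then have zp: "z \<in> plane R" using EP by auto
    note prim = prim_part_props[OF p mp V zp]
    from prim(2) z obtain w where "w \<in> plane R" "dot_perp R (prim_part p z) w = \<one>"
      by (auto simp: unimodular_def deep_def)
    then have "card (?line z) \<le> card (carrier R) * card (carrier R \<inter> ?Dv)"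
      using prim(1) z by (intro card_dot_perp_in_le[OF finite]) (auto simp: deep_def)
    also have "carrier R \<inter> ?Dv = ?Dv" by blast
    finally show "card (?line z) \<le> card (carrier R) * nat p ^ (l - V)"
      using card_multiples_le[OF p mp V] by (meson le_trans mult_le_mono2)
  qed
  also have "\<dots> \<le> card E * (card (carrier R) * nat p ^ (l - V))"
    using fE by (simp add: card_mono mult_le_mono1)
  finally show ?thesis
    by (simp add: mult.assoc)
qed

lemma card_outside_valuation_classes_le:
  assumes p: "prime p" and mp: "m = p ^ l" and V: "V \<le> l" and EP: "E \<subseteq> plane R" and n: "n \<ge> 2"
  shows "card (tuples n E - (\<Union>(j, v)\<in>{..<V} \<times> {..<V}. valuation_class R p V j v n E))
     \<le> (nat p ^ (l - V))^2 * card E ^ (n - 1) + card (carrier R) * nat p ^ (l - V) * card E ^ (n - 1)"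
proof -
  have fE: "finite E" using EP finite_plane[OF finite] finite_subset by blast
  have pow: "card E * card E ^ (n - 2) = card E ^ (n - 1)"
    using n by (cases n; cases "n - 1") (simp_all add: numeral_2_eq_2)
  let ?deep = "\<lambda>z. p ^ V dvd fst z \<and> p ^ V dvd snd z"
  let ?P = "\<lambda>z y. \<not> ?deep z \<and> p ^ V dvd dot_perp R (prim_part p z) y"
  define A1 where "A1 = {xs\<in>tuples n E. ?deep (xs ! 0)}"
  define A2 where "A2 = {xs\<in>tuples n E. ?P (xs ! 0) (xs ! 1)}"
  have "tuples n E - (\<Union>(j, v)\<in>{..<V} \<times> {..<V}. valuation_class R p V j v n E) \<subseteq> A1 \<union> A2"
  proof
    fix xs assume xs: "xs \<in> tuples n E - (\<Union>(j, v)\<in>{..<V} \<times> {..<V}. valuation_class R p V j v n E)"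
    let ?j = "content_val p (xs ! 0)" and ?v = "multiplicity p (dot_perp R (prim_part p (xs ! 0)) (xs ! 1))"
    show "xs \<in> A1 \<union> A2"
    proof (rule ccontr)
      assume "xs \<notin> A1 \<union> A2"
      then have nd: "\<not> ?deep (xs ! 0)" "\<not> p ^ V dvd dot_perp R (prim_part p (xs ! 0)) (xs ! 1)"
        using xs by (auto simp: A1_def A2_def)
      then have "?j < V" "?v < V" "xs \<in> valuation_class R p V ?j ?v n E"
        using xs content_val_props(1)[OF p nd(1)] multiplicity_less_if_not_dvd(1)[OF p nd(2)]
        by (auto simp: valuation_class_def)
      then show False using xs by blast
    qed
  qed
  then have "card (tuples n E - (\<Union>(j, v)\<in>{..<V} \<times> {..<V}. valuation_class R p V j v n E)) \<le> card (A1 \<union> A2)"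
    using finite_tuples[OF fE] by (intro card_mono) (auto simp: A1_def A2_def)
  also have "\<dots> \<le> card A1 + card A2"
    by (rule card_Un_le)
  also have "card A1 \<le> (nat p ^ (l - V))^2 * card E ^ (n - 1)"
    using card_tuples_filter_first_le[OF fE, of n ?deep] card_divisible_points_le[OF p mp V EP] n
    unfolding A1_def by (meson le_trans mult_le_mono1 one_le_numeral order.trans)
  also have "card A2 \<le> card E * card (carrier R) * nat p ^ (l - V) * card E ^ (n - 2)"
    using card_tuples_filter_first_two_le[OF fE n, of ?P] card_divisible_dot_perp_pairs_le[OF p mp V EP]
    unfolding A2_def by (metis (no_types, lifting) le_trans mult_le_mono1)
  also have "\<dots> = card (carrier R) * nat p ^ (l - V) * card E ^ (n - 1)"
    unfolding pow[symmetric] by (simp only: mult_ac)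
  finally show ?thesis by simp
qed

lemma card_outside_valuation_classes_le_half:
  assumes p: "prime p" and mp: "m = p ^ l" and V: "V \<le> l" and EP: "E \<subseteq> plane R" and n: "n \<ge> 2"
    and dense: "4 * real (card (carrier R))^2 \<le> 2 ^ V * real (card E)"
  shows "2 * real (card (tuples n E - (\<Union>(j, v)\<in>{..<V} \<times> {..<V}. valuation_class R p V j v n E)))
    \<le> real (card E) ^ n"
proof -
  define Good where "Good = (\<Union>(j, v)\<in>{..<V} \<times> {..<V}. valuation_class R p V j v n E)"
  define M where "M = real (card E)"
  define N where "N = real (card (carrier R))"
  define P where "P = real (nat p ^ (l - V))"
  have p1: "p > 1" using p prime_gt_1_int by blast
  have "card (tuples n E - Good) \<le> (nat p ^ (l - V))^2 * card E ^ (n - 1) + card (carrier R) * nat p ^ (l - V) * card E ^ (n - 1)"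
    unfolding Good_def by (rule card_outside_valuation_classes_le[OF p mp V EP n])
  then have "real (card (tuples n E - Good)) \<le> real ((nat p ^ (l - V))^2 * card E ^ (n - 1)
      + card (carrier R) * nat p ^ (l - V) * card E ^ (n - 1))"
    by (simp only: of_nat_le_iff)
  also have "\<dots> = (P^2 + N * P) * M ^ (n - 1)"
    unfolding M_def N_def P_def by (simp only: of_nat_add of_nat_mult of_nat_power distrib_right)
  finally have bad: "real (card (tuples n E - Good)) \<le> (P^2 + N * P) * M ^ (n - 1)" .
  have "2 ^ V * P \<le> real (nat p) ^ V * P"
    using p1 by (intro mult_right_mono power_mono) (auto simp: P_def)
  also have "\<dots> = N"
    using V p1 mp by (simp add: P_def N_def card_carrier nat_power_eq flip: power_add)
  finally have "2 ^ V * (P^2 + N * P) \<le> 2 * N^2"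
    by (rule mult_sq_add_le_twice_sq) (simp_all add: P_def)
  have M0: "0 \<le> M"
    by (simp add: M_def)
  from \<open>2 ^ V * (P^2 + N * P) \<le> 2 * N^2\<close> have "2 ^ V * (P^2 + N * P) * M ^ (n - 1) \<le> 2 * N^2 * M ^ (n - 1)"
    using M0 by (intro mult_right_mono) simp_all
  moreover from bad have "2 ^ V * real (card (tuples n E - Good)) \<le> 2 ^ V * (P^2 + N * P) * M ^ (n - 1)"
    using mult_left_mono[of _ _ "2 ^ V :: real"] by (simp add: mult.assoc)
  ultimately have "2 ^ V * real (card (tuples n E - Good)) \<le> 2 * N^2 * M ^ (n - 1)"
    by linarith
  also have "\<dots> \<le> 2 ^ V * M / 2 * M ^ (n - 1)"
    using dense M0 by (intro mult_right_mono) (auto simp: N_def M_def)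
  also have "\<dots> = 2 ^ V * (M * M ^ (n - 1) / 2)"
    by simp
  also have "M * M ^ (n - 1) = M ^ n"
    using n by (cases n) simp_all
  finally show ?thesis
    by (simp add: M_def Good_def)
qed

lemma card_valuation_classes_ge:
  assumes p: "prime p" and mp: "m = p ^ l" and V: "V \<le> l" and EP: "E \<subseteq> plane R" and n: "n \<ge> 2"
    and dense: "4 * real (card (carrier R))^2 \<le> 2 ^ V * real (card E)"
  shows "real (card E) ^ n \<le> 2 * real (card (\<Union>(j, v)\<in>{..<V} \<times> {..<V}. valuation_class R p V j v n E))"
proof -
  have fE: "finite E" using EP finite_plane[OF finite] finite_subset by blast
  let ?Good = "\<Union>(j, v)\<in>{..<V} \<times> {..<V}. valuation_class R p V j v n E"
  have "real (2 * card (tuples n E - ?Good)) \<le> real (card (tuples n E))"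
    using card_outside_valuation_classes_le_half[OF p mp V EP n dense] by (simp add: card_tuples[OF fE])
  then have "2 * card (tuples n E - ?Good) \<le> card (tuples n E)"
    by (simp only: of_nat_le_iff)
  then have "card (tuples n E) \<le> 2 * card ?Good"
    by (rule card_le_twice_if_diff_small) (auto simp: valuation_class_def finite_tuples[OF fE])
  then have "real (card (tuples n E)) \<le> real (2 * card ?Good)"
    by (simp only: of_nat_le_iff)
  then show ?thesis
    by (simp add: card_tuples[OF fE])
qed

lemma config_bound_residue_large_prime:
  assumes p: "prime p" and mp: "m = p ^ l" and l: "l \<ge> 1" and EP: "E \<subseteq> plane R" and n: "n \<ge> 2"
    and dense: "4 * real (nat p) ^ (2 * l - 1) \<le> real (card E)"
  shows "config_bound 4 n R E"
proof (rule config_bound_if_few_nonunit_pairs[OF finite EP n], rule few_nonunit_pairs[OF finite EP])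
  have "real (4 * nat p ^ (2 * l - 1)) \<le> real (card E)"
    using dense by simp
  then have dense_nat: "4 * nat p ^ (2 * l - 1) \<le> card E"
    by (simp only: of_nat_le_iff)
  have "card (carrier R) * card (carrier R - Units R) \<le> nat p ^ l * nat p ^ (l - 1)"
    using card_nonunits_le[OF p mp l] mp prime_gt_0_int[OF p] by (simp add: card_carrier nat_power_eq)
  also have "\<dots> = nat p ^ (2 * l - 1)"
    using l by (simp add: mult_2 flip: power_add)
  finally show "4 * (card (carrier R) * card (carrier R - Units R)) \<le> card E"
    using dense_nat by linarith
qed

lemma config_bound_residue_valuation_classes:
  assumes p: "prime p" and mp: "m = p ^ l" and V: "V \<le> l" "1 \<le> V" and EP: "E \<subseteq> plane R" and n: "n \<ge> 2"
    and dense: "4 * real (card (carrier R))^2 \<le> 2 ^ V * real (card E)"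
  shows "config_bound (4 * real V ^ 4 * real (nat p) ^ (V * (2 * n + 1))) n R E"
proof -
  let ?K = "real (card (config_classes R n E))" and ?S = "\<Sum>g\<in>SL2 R. fE R E g ^ n"
  have fE: "finite E" using EP finite_plane[OF finite] finite_subset by blast
  have fin: "finite (valuation_class R p V j v n E)" for j v
    using finite_tuples[OF fE] by (rule finite_subset[rotated]) (auto simp: valuation_class_def)
  have "(0, 0) \<in> {..<V} \<times> {..<V}" using V(2) by simp
  then have "\<exists>jv\<in>{..<V} \<times> {..<V}. card (\<Union>(j, v)\<in>{..<V} \<times> {..<V}. valuation_class R p V j v n E)
      \<le> card ({..<V} \<times> {..<V}) * card ((\<lambda>(j, v). valuation_class R p V j v n E) jv)"
    by (intro exists_card_UN_le_card_mult) (auto simp: fin split: prod.splits)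
  then obtain j v where jv: "j < V" "v < V"
    and pigeon: "card (\<Union>(j, v)\<in>{..<V} \<times> {..<V}. valuation_class R p V j v n E)
      \<le> V ^ 2 * card (valuation_class R p V j v n E)"
    by (auto simp: card_cartesian_product power2_eq_square)
  let ?G = "valuation_class R p V j v n E"
  have "real (card ?G)^2 \<le> real (card (label_set p j v n)) * ?K * ?S"
  proof (rule card_sq_le_via_orbit_labels[OF finite EP _ _ finite_label_set])
    show "orbit_label R p l j v ` ?G \<subseteq> label_set p j v n"
      using orbit_label_in_label_set[OF p mp V(1) EP n] by blast
    show "?G \<subseteq> tuples n E"
      by (auto simp: valuation_class_def)
  qed (use SL2_maps_to_if_same_label[OF p mp V(1) EP n] in blast)
  also have "\<dots> \<le> real (nat p) ^ (V * (2 * n + 1)) * ?K * ?S"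
  proof -
    have "real (card (label_set p j v n)) \<le> real (nat p) ^ (V * (2 * n + 1))"
      using card_label_set_le[of p j V v n] prime_gt_1_int[OF p] jv
      by (metis less_imp_le of_nat_le_iff of_nat_power)
    then show ?thesis
      by (intro mult_right_mono) (simp_all add: sum_fE_power_nonneg)
  qed
  finally have cs: "real (card ?G)^2 \<le> real (nat p) ^ (V * (2 * n + 1)) * ?K * ?S" .
  have "real (card (\<Union>(j, v)\<in>{..<V} \<times> {..<V}. valuation_class R p V j v n E)) \<le> real V ^ 2 * real (card ?G)"
    using pigeon by (simp flip: of_nat_power of_nat_mult)
  then have half: "real (card E) ^ n \<le> (2 * real V ^ 2) * real (card ?G)"
    using card_valuation_classes_ge[OF p mp V(1) EP n dense] by linarith
  have "(2 * real V ^ 2)^2 = 4 * real V ^ 4"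
    by (simp add: power_mult_distrib flip: power_mult)
  then show ?thesis
    unfolding config_bound_def using power_two_mult_le[OF of_nat_0_le_iff half cs] by (simp add: mult.assoc)
qed

end

section \<open>Choice of the constant\<close>

lemma eventually_four_le_powr:
  fixes c \<epsilon> :: real
  assumes "c > 0" "\<epsilon> > 0"
  obtains Q where "Q \<ge> 1" "\<And>x. x \<ge> Q \<Longrightarrow> 4 \<le> c * x powr \<epsilon>"
proof -
  have "eventually (\<lambda>x. 4 \<le> c * x powr \<epsilon>) at_top"
    using assms by real_asymp
  then obtain Q where "\<forall>x\<ge>Q. 4 \<le> c * x powr \<epsilon>"
    by (auto simp: eventually_at_top_linorder)
  then show thesis
    by (intro that[of "max Q 1"]) auto
qed

lemma exists_config_bound_field:
  fixes c \<epsilon> :: real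
  assumes "c > 0" "\<epsilon> > 0" "n \<ge> 2"
  obtains C where "C > 0"
    "\<And>(R :: int ring) E. field R \<Longrightarrow> finite (carrier R) \<Longrightarrow> E \<subseteq> plane R \<Longrightarrow>
      c * real (card (carrier R)) powr (1 + \<epsilon>) \<le> real (card E) \<Longrightarrow> config_bound C n R E"
proof -
  obtain Q where Q: "Q \<ge> 1" "\<And>x. x \<ge> Q \<Longrightarrow> 4 \<le> c * x powr \<epsilon>"
    using eventually_four_le_powr[OF assms(1,2)] by blast
  show thesis
  proof (rule that[of "max 4 (Q ^ (2 * n))"])
    fix R :: "int ring" and E
    assume R: "field R" "finite (carrier R)" and EP: "E \<subseteq> plane R"
      and dense: "c * real (card (carrier R)) powr (1 + \<epsilon>) \<le> real (card E)"
    interpret field R by (fact R(1))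
    let ?N = "real (card (carrier R))"
    show "config_bound (max 4 (Q ^ (2 * n))) n R E"
    proof (cases "?N < Q")
      case True
      then have "?N ^ (2 * n) \<le> Q ^ (2 * n)"
        by (intro power_mono) auto
      then show ?thesis
        using assms(3) by (intro config_bound_mono[OF config_bound_trivial[OF R(2) EP]]) (simp_all add: le_max_iff_disj)
    next
      case False
      have "0 < ?N" using R(2) zero_closed by (auto simp: card_gt_0_iff)
      then have "4 * ?N \<le> c * ?N powr (1 + \<epsilon>)"
        using Q(2)[of ?N] False by (simp add: powr_add mult_ac)
      then have "4 * card (carrier R) \<le> card E"
        using dense by linarith
      then show ?thesis
        by (intro config_bound_mono[OF config_bound_dense_field[OF R(2) EP assms(3)]]) (simp_all add: le_max_iff_disj)
    qed
  qed simp
qed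

lemma exists_pow2_ge:
  fixes x :: real
  obtains V :: nat where "V \<ge> 1" "x \<le> 2 ^ V"
proof -
  obtain V :: nat where "x < 2 ^ V"
    using real_arch_pow[of 2 x] by auto
  moreover have "(2::real) ^ V \<le> 2 ^ Suc V"
    by simp
  ultimately have "x \<le> 2 ^ Suc V"
    by linarith
  then show thesis
    using that[of "Suc V"] by simp
qed

lemma powr_density_le:
  fixes p :: int and c \<delta> \<epsilon> x :: real
  assumes p: "prime p" and l: "l \<ge> 1" and "c > 0" "\<delta> \<ge> 0"
    and dense: "c * real_of_int p powr (2 * real l - 1 + \<delta> + \<epsilon>) \<le> x"
  shows "c * (real (nat p) ^ (2 * l - 1) * real (nat p) powr \<epsilon>) \<le> x"
proof -
  have p1: "real_of_int p > 1" using prime_gt_1_int[OF p] by simp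
  have "real (2 * l - 1) = 2 * real l - 1"
    using l by simp
  then have "real_of_int p powr (2 * real l - 1) = real_of_int p ^ (2 * l - 1)"
    using powr_realpow[of "real_of_int p" "2 * l - 1"] p1 by simp
  moreover have "real (nat p) = real_of_int p"
    using prime_ge_0_int[OF p] by simp
  ultimately have "c * (real (nat p) ^ (2 * l - 1) * real (nat p) powr \<epsilon>) = c * real_of_int p powr (2 * real l - 1 + \<epsilon>)"
    by (simp add: powr_add)
  also have "\<dots> \<le> c * real_of_int p powr (2 * real l - 1 + \<delta> + \<epsilon>)"
    using p1 assms(3,4) by (intro mult_left_mono powr_mono) auto
  finally show ?thesis
    using dense by linarith
qed

lemma sq_power_eq_mult_power:
  fixes x :: real
  assumes "l \<ge> 1"
  shows "(x ^ l)^2 = x * x ^ (2 * l - 1)"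
proof -
  have "(x ^ l)^2 = x ^ (2 * l)"
    by (simp add: power_mult[symmetric] mult.commute)
  also have "2 * l = Suc (2 * l - 1)"
    using assms by simp
  finally show ?thesis
    by (simp only: power_Suc)
qed

lemma config_bound_residue_bounded_prime:
  fixes c Q :: real
  assumes c: "c > 0" and Q: "Q \<ge> 1" and V: "V \<ge> 1" "4 * Q / c \<le> 2 ^ V" and n: "n \<ge> 2"
    and p: "prime p" and l: "l \<ge> 1" and pQ: "real (nat p) < Q"
    and EP: "E \<subseteq> plane (residue_ring (p ^ l))" and dense: "c * real (nat p) ^ (2 * l - 1) \<le> real (card E)"
  shows "config_bound (max (Q ^ (V * (2 * n))) (4 * real V ^ 4 * Q ^ (V * (2 * n + 1)))) n (residue_ring (p ^ l)) E"
proof -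
  interpret residues "p ^ l" "residue_ring (p ^ l)"
    using prime_gt_1_int[OF p] l by unfold_locales simp_all
  let ?R = "residue_ring (p ^ l)" and ?P = "real (nat p)"
  have N: "real (card (carrier ?R)) = ?P ^ l"
    using card_carrier_prime_power[OF p refl] by simp
  show ?thesis
  proof (cases "l < V")
    case True
    have "?P ^ l \<le> Q ^ l"
      using pQ by (intro power_mono) auto
    also have "\<dots> \<le> Q ^ V"
      using Q True by (intro power_increasing) auto
    finally have "real (card (carrier ?R)) ^ (2 * n) \<le> (Q ^ V) ^ (2 * n)"
      unfolding N by (intro power_mono) auto
    then show ?thesis
      using n by (intro config_bound_mono[OF config_bound_trivial[OF finite EP]]) (simp_all add: power_mult le_max_iff_disj)
  next
    case False
    have "4 * real (card (carrier ?R))^2 = 4 * ?P * ?P ^ (2 * l - 1)"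
      unfolding N sq_power_eq_mult_power[OF l] by (simp only: mult.assoc)
    also have "\<dots> \<le> 4 * Q * ?P ^ (2 * l - 1)"
      using pQ by (intro mult_right_mono) auto
    also have "\<dots> = 4 * Q / c * (c * ?P ^ (2 * l - 1))"
      using c by simp
    also have "\<dots> \<le> 2 ^ V * real (card E)"
      using V(2) dense c Q by (intro mult_mono) auto
    finally have "4 * real (card (carrier ?R))^2 \<le> 2 ^ V * real (card E)" .
    moreover have "?P ^ (V * (2 * n + 1)) \<le> Q ^ (V * (2 * n + 1))"
      using pQ by (intro power_mono) auto
    then have "4 * real V ^ 4 * ?P ^ (V * (2 * n + 1))
        \<le> max (Q ^ (V * (2 * n))) (4 * real V ^ 4 * Q ^ (V * (2 * n + 1)))"
      by (intro max.coboundedI2 mult_left_mono) auto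
    ultimately show ?thesis
      using False by (intro config_bound_mono[OF config_bound_residue_valuation_classes[OF p refl _ V(1) EP n]]) simp_all
  qed
qed

lemma exists_config_bound_residue:
  fixes c \<epsilon> \<delta> :: real
  assumes "c > 0" "\<epsilon> > 0" "\<delta> \<ge> 0" "n \<ge> 2"
  obtains C where "C > 0"
    "\<And>p l E. prime p \<Longrightarrow> l \<ge> 1 \<Longrightarrow> E \<subseteq> plane (residue_ring (p ^ l)) \<Longrightarrow>
      c * real_of_int p powr (2 * real l - 1 + \<delta> + \<epsilon>) \<le> real (card E) \<Longrightarrow>
      config_bound C n (residue_ring (p ^ l)) E"
proof -
  obtain Q where Q: "Q \<ge> 1" "\<And>x. x \<ge> Q \<Longrightarrow> 4 \<le> c * x powr \<epsilon>"
    using eventually_four_le_powr[OF assms(1,2)] by blast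
  obtain V :: nat where V: "V \<ge> 1" "4 * Q / c \<le> 2 ^ V"
    using exists_pow2_ge by blast
  define C where "C = max 4 (max (Q ^ (V * (2 * n))) (4 * real V ^ 4 * Q ^ (V * (2 * n + 1))))"
  show thesis
  proof (rule that[of C])
    fix p l E
    assume p: "prime p" and l: "l \<ge> 1" and EP: "E \<subseteq> plane (residue_ring (p ^ l))"
      and dense: "c * real_of_int p powr (2 * real l - 1 + \<delta> + \<epsilon>) \<le> real (card E)"
    interpret residues "p ^ l" "residue_ring (p ^ l)"
      using prime_gt_1_int[OF p] l by unfold_locales simp_all
    let ?P = "real (nat p)"
    have p1: "?P > 1" using prime_gt_1_int[OF p] by simp
    note dense' = powr_density_le[OF p l assms(1,3) dense]
    show "config_bound C n (residue_ring (p ^ l)) E"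
    proof (cases "?P < Q")
      case False
      then have "4 * ?P ^ (2 * l - 1) \<le> (c * ?P powr \<epsilon>) * ?P ^ (2 * l - 1)"
        using Q(2)[of ?P] by (intro mult_right_mono) auto
      also have "\<dots> = c * (?P ^ (2 * l - 1) * ?P powr \<epsilon>)"
        by (simp only: mult_ac)
      also have "\<dots> \<le> real (card E)"
        by (rule dense')
      finally show ?thesis
        using assms(4) by (intro config_bound_mono[OF config_bound_residue_large_prime[OF p refl l EP]]) (simp_all add: C_def le_max_iff_disj)
    next
      case True
      have "1 \<le> ?P powr \<epsilon>"
        using p1 assms(2) by (intro ge_one_powr_ge_zero) auto
      then have "c * ?P ^ (2 * l - 1) * 1 \<le> c * ?P ^ (2 * l - 1) * ?P powr \<epsilon>"
        using assms(1) by (intro mult_left_mono) auto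
      then have "c * ?P ^ (2 * l - 1) \<le> c * (?P ^ (2 * l - 1) * ?P powr \<epsilon>)"
        by (simp add: mult.assoc)
      then have "c * ?P ^ (2 * l - 1) \<le> real (card E)"
        using dense' by linarith
      then show ?thesis
        by (intro config_bound_mono[OF config_bound_residue_bounded_prime[OF assms(1) Q(1) V assms(4) p l True EP]])
          (simp_all add: C_def le_max_iff_disj)
    qed
  qed (simp add: C_def)
qed

theorem lemma2p6:
  fixes k :: nat and \<epsilon> c :: real
  assumes "k \<ge> 1" and "\<epsilon> > 0" and "c > 0"
  shows "\<exists>C>0. \<forall>(R :: int ring) (E :: (int \<times> int) set).
     E \<subseteq> plane R \<longrightarrow>
     ((field R \<and> finite (carrier R) \<and> real (card E) \<ge> c * real (card (carrier R)) powr (1 + \<epsilon>))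
      \<or> (\<exists>(p :: int) (l :: nat). prime p \<and> l \<ge> 1 \<and> R = residue_ring (p ^ l) \<and>
           real (card E) \<ge> c * real_of_int p powr (2 * real l - 1 + 1 / real (k + 1) + \<epsilon>)))
     \<longrightarrow> real (card E) ^ (2 * (k + 1))
           \<le> C * real (card (config_classes R (k + 1) E)) * (\<Sum>g\<in>SL2 R. fE R E g ^ (k + 1))"
proof -
  have n: "k + 1 \<ge> 2" using assms(1) by simp
  obtain C1 where "C1 > 0" and C1: "\<And>(R :: int ring) E. field R \<Longrightarrow> finite (carrier R) \<Longrightarrow> E \<subseteq> plane R \<Longrightarrow>
      c * real (card (carrier R)) powr (1 + \<epsilon>) \<le> real (card E) \<Longrightarrow> config_bound C1 (k + 1) R E"
    using exists_config_bound_field[OF assms(3,2) n] by blast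
  obtain C2 where "C2 > 0" and C2: "\<And>p l E. prime p \<Longrightarrow> l \<ge> 1 \<Longrightarrow> E \<subseteq> plane (residue_ring (p ^ l)) \<Longrightarrow>
      c * real_of_int p powr (2 * real l - 1 + 1 / real (k + 1) + \<epsilon>) \<le> real (card E) \<Longrightarrow>
      config_bound C2 (k + 1) (residue_ring (p ^ l)) E"
    using exists_config_bound_residue[OF assms(3,2) _ n, of "1 / real (k + 1)"] by auto
  have "max C1 C2 > 0"
    using \<open>C1 > 0\<close> by simp
  then show ?thesis
    unfolding config_bound_def[symmetric]
    by (blast intro: config_bound_mono[OF C1] config_bound_mono[OF C2] max.cobounded1 max.cobounded2)
qed

end
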